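(* Let $I=\{1,\dots,\ell\}$, $J=\{\ell+1,\dots,p\}$, let $h_1,\dots,h_p\colon\mathbb R^n\times\mathbb R^m\to\overline{\mathbb R}$ and $\Gamma(x):=\{y\in\mathbb R^m\mid h_i(x,y)\le0\ (i\in I),\ h_i(x,y)=0\ (i\in J)\}$. Fix $\bar x\in\operatorname{dom}\Gamma$. Assume that $h_1,\dots,h_p$ are continuous and continuously differentiable with respect to $y$ in a neighborhood of $\{\bar x\}\times\Gamma(\bar x)$, that $h_i(x,\cdot)\colon\mathbb R^m\to\mathbb R$ is continuous for every $x\in\operatorname{dom}\Gamma$ and every $i$, and assume (A1): for each $x\in\mathbb R^n$, $h_i(x,\cdot)$ is convex for $i\in I$ and affine for $i\in J$; and (A2): $\Gamma$ is locally bounded at $\bar x$. Suppose that RCPLD holds with respect to $\operatorname{dom}\Gamma$ at each point of $\{\bar x\}\times\Gamma(\bar x)$. Then $\Gamma$ is lower semicontinuous at $\bar x$ with respect to $\operatorname{dom}\Gamma$.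
   Context: $\operatorname{dom}\Gamma:=\{x\mid\Gamma(x)\ne\emptyset\}$. $\Gamma$ is locally bounded at $\bar x$ if there are a bounded set $B$ and a neighborhood $V$ of $\bar x$ with $\Gamma(x)\subset B$ for all $x\in V$. $\Gamma$ is lower semicontinuous at $\bar x$ with respect to $\Omega$ if for each open set $O$ with $\Gamma(\bar x)\cap O\ne\emptyset$ there is a neighborhood $V$ of $\bar x$ with $\Gamma(x)\cap O\neq\emptyset$ for all $x\in V\cap\Omega$. A pair of finite families $((a^i)_{i\in I_1},(b^i)_{i\in I_2})$ is positive-linearly dependent if there are scalars $\alpha_i\ge0$, $\beta_i$, not all zero, with $\sum\alpha_ia^i+\sum\beta_ib^i=0$. For $(\bar x,\bar y)\in\operatorname{gph}\Gamma$ let $I(\bar x,\bar y):=\{i\in I\mid h_i(\bar x,\bar y)=0\}$. RCPLD holds at $(\bar x,\bar y)$ with respect to $\Omega\subset\mathbb R^n$ if there are a neighborhood $U$ of $(\bar x,\bar y)$ and an index set $S\subset J$ such that: (i) $\{\nabla_yh_i(\bar x,\bar y)\mid i\in S\}$ is a basis of the span of $\{\nabla_yh_i(\bar x,\bar y)\mid i\in J\}$; (ii) $(\nabla_yh_i(x,y))_{i\in J}$ has constant rank on $U\cap(\Omega\times\mathbb R^m)$; (iii) for each $K\subset I(\bar x,\bar y)$ such that $((\nabla_yh_i(\bar x,\bar y))_{i\in K},(\nabla_yh_i(\bar x,\bar y))_{i\in S})$ is positive-linearly dependent, the family $(\nabla_yh_i(x,y))_{i\in K\cup S}$ is linearly dependent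 for each $(x,y)\in U\cap(\Omega\times\mathbb R^m)$. *)

theory Defs
  imports "HOL-Analysis.Analysis" "HOL-Library.Extended_Real"
begin

definition Icon :: "nat \<Rightarrow> nat set" where "Icon l = {1..l}"
definition Jcon :: "nat \<Rightarrow> nat \<Rightarrow> nat set" where "Jcon l p = {l+1..p}"

definition Gam :: "(nat \<Rightarrow> 'a \<Rightarrow> 'b \<Rightarrow> ereal) \<Rightarrow> nat \<Rightarrow> nat \<Rightarrow> 'a \<Rightarrow> 'b set" where
  "Gam h l p x = {y. (\<forall>i\<in>Icon l. h i x y \<le> 0) \<and> (\<forall>i\<in>Jcon l p. h i x y = 0)}"

definition domG :: "('a \<Rightarrow> 'b set) \<Rightarrow> 'a set" where
  "domG G = {x. G x \<noteq> {}}"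

definition grad_y :: "('a \<Rightarrow> 'b::real_inner \<Rightarrow> ereal) \<Rightarrow> 'a \<Rightarrow> 'b \<Rightarrow> 'b" where
  "grad_y f x y = (SOME g. ((\<lambda>z. real_of_ereal (f x z)) has_derivative (\<lambda>v. g \<bullet> v)) (at y))"

definition ereal_convex :: "('b::real_vector \<Rightarrow> ereal) \<Rightarrow> bool" where
  "ereal_convex f = convex {(y, t::real). f y \<le> ereal t}"

definition ereal_affine :: "('b::real_inner \<Rightarrow> ereal) \<Rightarrow> bool" where
  "ereal_affine f = (\<exists>a b. \<forall>y. f y = ereal (a \<bullet> y + b))"

definition locally_bounded_at :: "('a::topological_space \<Rightarrow> 'b::metric_space set) \<Rightarrow> 'a \<Rightarrow> bool" where
  "locally_bounded_at G x0 = (\<exists>B V. bounded B \<and> open V \<and> x0 \<in> V \<and> (\<forall>x\<in>V. G x \<subseteq> B))"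

definition lsc_wrt :: "('a::topological_space \<Rightarrow> 'b::topological_space set) \<Rightarrow> 'a \<Rightarrow> 'a set \<Rightarrow> bool" where
  "lsc_wrt G x0 \<Omega> = (\<forall>Ob. open Ob \<and> G x0 \<inter> Ob \<noteq> {} \<longrightarrow>
      (\<exists>V. open V \<and> x0 \<in> V \<and> (\<forall>x\<in>V \<inter> \<Omega>. G x \<inter> Ob \<noteq> {})))"

definition pos_lin_dep :: "(nat \<Rightarrow> 'b::real_vector) \<Rightarrow> nat set \<Rightarrow> (nat \<Rightarrow> 'b) \<Rightarrow> nat set \<Rightarrow> bool" where
  "pos_lin_dep a K b S = (\<exists>\<alpha> \<beta>. (\<forall>i\<in>K. \<alpha> i \<ge> 0) \<and> ((\<exists>i\<in>K. \<alpha> i \<noteq> 0) \<or> (\<exists>i\<in>S. \<beta> i \<noteq> 0)) \<and>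
      (\<Sum>i\<in>K. \<alpha> i *\<^sub>R a i) + (\<Sum>i\<in>S. \<beta> i *\<^sub>R b i) = 0)"

definition fam_lin_dep :: "(nat \<Rightarrow> 'b::real_vector) \<Rightarrow> nat set \<Rightarrow> bool" where
  "fam_lin_dep a K = (\<exists>c. (\<exists>i\<in>K. c i \<noteq> 0) \<and> (\<Sum>i\<in>K. c i *\<^sub>R a i) = 0)"

definition fam_rank :: "(nat \<Rightarrow> 'b::euclidean_space) \<Rightarrow> nat set \<Rightarrow> nat" where
  "fam_rank a K = dim (span (a ` K))"

definition active_set :: "(nat \<Rightarrow> 'a \<Rightarrow> 'b \<Rightarrow> ereal) \<Rightarrow> nat \<Rightarrow> 'a \<Rightarrow> 'b \<Rightarrow> nat set" where
  "active_set h l x y = {i\<in>Icon l. h i x y = 0}"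

definition RCPLD :: "(nat \<Rightarrow> 'a::topological_space \<Rightarrow> 'b::euclidean_space \<Rightarrow> ereal) \<Rightarrow> nat \<Rightarrow> nat \<Rightarrow> 'a set \<Rightarrow> 'a \<Rightarrow> 'b \<Rightarrow> bool" where
  "RCPLD h l p \<Omega> x0 y0 =
    (\<exists>U S. open U \<and> (x0, y0) \<in> U \<and> S \<subseteq> Jcon l p \<and>
      \<comment> \<open>(i) basis\<close>
      \<not> fam_lin_dep (\<lambda>i. grad_y (h i) x0 y0) S \<and>
      span ((\<lambda>i. grad_y (h i) x0 y0) ` S) = span ((\<lambda>i. grad_y (h i) x0 y0) ` Jcon l p) \<and>
      \<comment> \<open>(ii) constant rank\<close>
      (\<forall>q1\<in>U \<inter> (\<Omega> \<times> UNIV). \<forall>q2\<in>U \<inter> (\<Omega> \<times> UNIV).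
         fam_rank (\<lambda>i. grad_y (h i) (fst q1) (snd q1)) (Jcon l p) =
         fam_rank (\<lambda>i. grad_y (h i) (fst q2) (snd q2)) (Jcon l p)) \<and>
      \<comment> \<open>(iii)\<close>
      (\<forall>K\<subseteq>active_set h l x0 y0.
         pos_lin_dep (\<lambda>i. grad_y (h i) x0 y0) K (\<lambda>i. grad_y (h i) x0 y0) S \<longrightarrow>
         (\<forall>(x, y)\<in>U \<inter> (\<Omega> \<times> UNIV). fam_lin_dep (\<lambda>i. grad_y (h i) x y) (K \<union> S))))"

end

theory Submission
  imports Defs
begin

(*
  Suppose lower semicontinuity fails: there are ybar in Gamma(xbar), r > 0 and x_k -> xbar in
  dom Gamma with Gamma(x_k) disjoint from the closed ball B(ybar, r).  The merit function
  Phi_x(y) = max(0, h_i(x,y) for i in I, |h_j(x,y)| for j in J) is convex in y and vanishes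
  exactly on Gamma(x).  A minimiser y_k of Phi_{x_k} over B(ybar, r) lies on the sphere (because
  Gamma(x_k) is nonempty) and satisfies a KKT system
    sum_c mu_c grad_y h_c(x_k, y_k) = - tau_k (y_k - ybar),   tau_k > 0,
  with mu_c >= 0 supported on the most violated inequality constraints.  Near the limit, the
  constant rank condition keeps the RCPLD basis S of the equality gradients a basis, so a
  Caratheodory argument rewrites this as a combination over K_k and S with linearly independent
  gradients, and convexity bounds its normalised residual by 2 Phi_{x_k}(ybar) / r -> 0.  Along a
  subsequence K_k = K is constant and y_k -> y in Gamma(xbar); the normalised coefficients converge
  to a positive-linear dependence of the gradients indexed by K and S at (xbar, y), with K active.
  Condition (iii) of RCPLD then makes K and S dependent at (x_k, y_k), a contradiction.
*)

section \<open>Linear dependence of indexed families\<close>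

lemma independent_image_if_not_fam_lin_dep:
  fixes w :: "nat \<Rightarrow> 'a::real_vector"
  assumes S: "finite S" and nd: "\<not> fam_lin_dep w S"
  shows "inj_on w S" and "independent (w ` S)"
proof -
  show inj: "inj_on w S"
  proof (rule inj_onI, rule ccontr)
    fix i j assume ij: "i \<in> S" "j \<in> S" "w i = w j" "i \<noteq> j"
    define c where "c k = (if k = i then 1 else if k = j then -1 else (0::real))" for k
    have "(\<Sum>k\<in>S. c k *\<^sub>R w k) = (\<Sum>k\<in>S. (if k = i then w i else 0) - (if k = j then w j else 0))"
      by (intro sum.cong refl) (use ij in \<open>auto simp: c_def\<close>)
    also have "\<dots> = 0" using S ij by (simp add: sum_subtractf sum.delta)
    finally have "fam_lin_dep w S" unfolding fam_lin_dep_def using ij by (intro exI[of _ c]) (auto simp: c_def)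
    then show False using nd by simp
  qed
  show "independent (w ` S)"
  proof
    assume "dependent (w ` S)"
    then obtain u where u: "\<exists>v\<in>w ` S. u v \<noteq> 0" "(\<Sum>v\<in>w ` S. u v *\<^sub>R v) = 0"
      using dependent_finite[of "w ` S"] S by auto
    have "(\<Sum>i\<in>S. u (w i) *\<^sub>R w i) = 0"
      using u(2) by (simp add: sum.reindex[OF inj])
    then show False using nd u(1) unfolding fam_lin_dep_def by auto
  qed
qed

lemma dim_span_image_eq_card:
  fixes w :: "nat \<Rightarrow> 'a::euclidean_space"
  assumes "finite S" and "\<not> fam_lin_dep w S"
  shows "dim (span (w ` S)) = card S"
  using dim_span_eq_card_independent[OF independent_image_if_not_fam_lin_dep(2)[OF assms]]
    card_image[OF independent_image_if_not_fam_lin_dep(1)[OF assms]]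
  by simp

lemma fam_rank_eq_card:
  fixes w :: "nat \<Rightarrow> 'a::euclidean_space"
  assumes "finite S" and "\<not> fam_lin_dep w S" and "span (w ` S) = span (w ` J)"
  shows "fam_rank w J = card S"
  using dim_span_image_eq_card[OF assms(1,2)] assms(3) by (simp add: fam_rank_def)

lemma span_image_eq_if_fam_rank_eq_card:
  fixes w :: "nat \<Rightarrow> 'a::euclidean_space"
  assumes J: "finite J" and SJ: "S \<subseteq> J" and nd: "\<not> fam_lin_dep w S"
    and rank: "fam_rank w J = card S"
  shows "span (w ` J) = span (w ` S)"
proof -
  have "dim (span (w ` S)) = dim (span (w ` J))"
    using dim_span_image_eq_card[OF finite_subset[OF SJ J] nd] rank by (simp add: fam_rank_def)
  moreover have "span (w ` S) \<subseteq> span (w ` J)" using SJ by (intro span_mono) auto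
  ultimately show ?thesis by (intro subspace_dim_equal[symmetric]) auto
qed

lemma span_image_sum:
  fixes w :: "nat \<Rightarrow> 'a::real_vector"
  assumes "finite S" and "z \<in> span (w ` S)"
  shows "\<exists>\<beta>. z = (\<Sum>i\<in>S. \<beta> i *\<^sub>R w i)"
  using assms(2)
proof (induction rule: span_induct)
  case base
  let ?T = "{z. \<exists>\<beta>. z = (\<Sum>i\<in>S. \<beta> i *\<^sub>R w i)}"
  show ?case
    unfolding subspace_def
  proof (intro conjI ballI allI)
    show "0 \<in> ?T" by (auto intro!: exI[of _ "\<lambda>_. 0"])
  next
    fix x y assume "x \<in> ?T" "y \<in> ?T"
    then obtain a b where "x = (\<Sum>i\<in>S. a i *\<^sub>R w i)" "y = (\<Sum>i\<in>S. b i *\<^sub>R w i)" by blast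
    then show "x + y \<in> ?T"
      by (auto intro!: exI[of _ "\<lambda>i. a i + b i"] simp: scaleR_add_left sum.distrib)
  next
    fix r :: real and x assume "x \<in> ?T"
    then obtain a where "x = (\<Sum>i\<in>S. a i *\<^sub>R w i)" by blast
    then show "r *\<^sub>R x \<in> ?T"
      by (auto intro!: exI[of _ "\<lambda>i. r * a i"] simp: scaleR_sum_right)
  qed
next
  case (step x)
  then obtain j where j: "j \<in> S" "x = w j" by blast
  have "(\<Sum>i\<in>S. (if i = j then 1 else 0) *\<^sub>R w i) = x"
    using j assms(1) by (simp add: if_distrib[of "\<lambda>a. a *\<^sub>R _"] sum.delta cong: if_cong)
  then show ?case by metis
qed

lemma fam_lin_dep_union_positive:
  fixes w :: "nat \<Rightarrow> 'a::real_vector"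
  assumes P: "finite P" and S: "finite S" and disj: "P \<inter> S = {}"
    and nd: "\<not> fam_lin_dep w S" and dep: "fam_lin_dep w (P \<union> S)"
  shows "\<exists>a. (\<exists>i\<in>P. a i > 0) \<and> (\<Sum>i\<in>P \<union> S. a i *\<^sub>R w i) = 0"
proof -
  obtain a where a_nz: "\<exists>i\<in>P \<union> S. a i \<noteq> 0" and a_sum: "(\<Sum>i\<in>P \<union> S. a i *\<^sub>R w i) = 0"
    using dep unfolding fam_lin_dep_def by blast
  obtain i where i: "i \<in> P" "a i \<noteq> 0"
  proof (rule ccontr)
    assume "\<not> thesis"
    then have "\<forall>i\<in>P. a i = 0" using that by blast
    moreover have "(\<Sum>i\<in>P \<union> S. a i *\<^sub>R w i) = (\<Sum>i\<in>P. a i *\<^sub>R w i) + (\<Sum>i\<in>S. a i *\<^sub>R w i)"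
      using P S disj by (rule sum.union_disjoint)
    ultimately have "fam_lin_dep w S"
      using a_nz a_sum unfolding fam_lin_dep_def by auto
    then show False using nd by simp
  qed
  show ?thesis
  proof (cases "a i > 0")
    case True
    then show ?thesis using i a_sum by blast
  next
    case False
    then show ?thesis using i a_sum
      by (intro exI[of _ "\<lambda>j. - a j"] conjI bexI[of _ i]) (auto simp: sum_negf)
  qed
qed

lemma conic_combination_drop_index:
  fixes w :: "nat \<Rightarrow> 'a::real_vector"
  assumes P: "finite P" and S: "finite S" and disj: "P \<inter> S = {}"
    and nd: "\<not> fam_lin_dep w S" and dep: "fam_lin_dep w (P \<union> S)"
    and c: "\<forall>i\<in>P. c i \<ge> 0"
  shows "\<exists>i0\<in>P. \<exists>c'. (\<forall>i\<in>P. c' i \<ge> 0) \<and> c' i0 = 0 \<and>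
    (\<Sum>i\<in>P \<union> S. c' i *\<^sub>R w i) = (\<Sum>i\<in>P \<union> S. c i *\<^sub>R w i)"
proof -
  obtain a where a_pos: "\<exists>i\<in>P. a i > 0" and a_sum: "(\<Sum>i\<in>P \<union> S. a i *\<^sub>R w i) = 0"
    using fam_lin_dep_union_positive[OF P S disj nd dep] by blast
  define Q where "Q = {i\<in>P. a i > 0}"
  have Q: "finite Q" "Q \<noteq> {}" using P a_pos by (auto simp: Q_def)
  \<comment> \<open>the ratio test of the simplex method\<close>
  define t where "t = Min ((\<lambda>i. c i / a i) ` Q)"
  have "t \<in> (\<lambda>i. c i / a i) ` Q" unfolding t_def using Q by (intro Min_in) auto
  then obtain i0 where i0: "i0 \<in> Q" "t = c i0 / a i0" by blast
  have t_le: "t \<le> c i / a i" if "i \<in> Q" for i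
    using Q that unfolding t_def by simp
  have t_nonneg: "0 \<le> t" using i0 c by (simp add: Q_def)
  define c' where "c' i = c i - t * a i" for i
  have "c' i \<ge> 0" if "i \<in> P" for i
  proof (cases "a i > 0")
    case True
    then show ?thesis using t_le[of i] that by (simp add: Q_def c'_def le_divide_eq)
  next
    case False
    then have "t * a i \<le> 0" using t_nonneg by (simp add: mult_nonneg_nonpos)
    moreover have "0 \<le> c i" using c that by blast
    ultimately show ?thesis by (simp add: c'_def)
  qed
  moreover have "c' i0 = 0" using i0 by (simp add: Q_def c'_def)
  moreover have "(\<Sum>i\<in>P \<union> S. c' i *\<^sub>R w i) =
      (\<Sum>i\<in>P \<union> S. c i *\<^sub>R w i) - t *\<^sub>R (\<Sum>i\<in>P \<union> S. a i *\<^sub>R w i)"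
    by (simp add: c'_def scaleR_diff_left sum_subtractf scaleR_sum_right)
  ultimately show ?thesis using i0 a_sum by (auto simp: Q_def)
qed

lemma conic_combination_reduce:
  fixes w :: "nat \<Rightarrow> 'a::real_vector"
  assumes "finite P" and S: "finite S" and "P \<inter> S = {}"
    and nd: "\<not> fam_lin_dep w S" and "\<forall>i\<in>P. c i \<ge> 0"
  shows "\<exists>K c'. K \<subseteq> P \<and> (\<forall>i\<in>K. c' i \<ge> 0) \<and> \<not> fam_lin_dep w (K \<union> S) \<and>
    (\<Sum>i\<in>K \<union> S. c' i *\<^sub>R w i) = (\<Sum>i\<in>P \<union> S. c i *\<^sub>R w i)"
  using assms(1,3,5)
proof (induction "card P" arbitrary: P c rule: less_induct)
  case (less P)
  show ?case
  proof (cases "fam_lin_dep w (P \<union> S)")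
    case False
    then show ?thesis using less.prems by blast
  next
    case True
    from conic_combination_drop_index[OF less.prems(1) S less.prems(2) nd True less.prems(3)]
    obtain i0 c' where i0: "i0 \<in> P" and c': "\<forall>i\<in>P. c' i \<ge> 0" "c' i0 = 0"
      and eq: "(\<Sum>i\<in>P \<union> S. c' i *\<^sub>R w i) = (\<Sum>i\<in>P \<union> S. c i *\<^sub>R w i)"
      by blast
    have card_lt: "card (P - {i0}) < card P" using less.prems(1) i0 by (rule card_Diff1_less)
    have "finite (P - {i0})" "(P - {i0}) \<inter> S = {}" "\<forall>i\<in>P - {i0}. c' i \<ge> 0"
      using less.prems(1,2) c'(1) by auto
    from less.hyps[OF card_lt this]
    obtain K c'' where K: "K \<subseteq> P - {i0}" "\<forall>i\<in>K. c'' i \<ge> 0" "\<not> fam_lin_dep w (K \<union> S)"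
      and eq'': "(\<Sum>i\<in>K \<union> S. c'' i *\<^sub>R w i) = (\<Sum>i\<in>(P - {i0}) \<union> S. c' i *\<^sub>R w i)"
      by blast
    have "(\<Sum>i\<in>(P - {i0}) \<union> S. c' i *\<^sub>R w i) = (\<Sum>i\<in>P \<union> S. c' i *\<^sub>R w i)"
      using less.prems(1) S i0 c'(2) by (intro sum.mono_neutral_left) auto
    then show ?thesis using K eq'' eq by (intro exI[of _ K] exI[of _ c'']) auto
  qed
qed

lemma conic_span_combination_reduce:
  fixes w :: "nat \<Rightarrow> 'a::real_vector"
  assumes P: "finite P" and S: "finite S" and disj: "P \<inter> S = {}"
    and nd: "\<not> fam_lin_dep w S" and \<mu>: "\<forall>i\<in>P. \<mu> i \<ge> 0" and z: "z \<in> span (w ` S)"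
  shows "\<exists>K c. K \<subseteq> P \<and> (\<forall>i\<in>K. c i \<ge> 0) \<and> \<not> fam_lin_dep w (K \<union> S) \<and>
    (\<Sum>i\<in>K \<union> S. c i *\<^sub>R w i) = (\<Sum>i\<in>P. \<mu> i *\<^sub>R w i) + z"
proof -
  obtain \<beta> where z_eq: "z = (\<Sum>i\<in>S. \<beta> i *\<^sub>R w i)" using span_image_sum[OF S z] by blast
  define c where "c i = (if i \<in> P then \<mu> i else \<beta> i)" for i
  have "(\<Sum>i\<in>P \<union> S. c i *\<^sub>R w i) = (\<Sum>i\<in>P. c i *\<^sub>R w i) + (\<Sum>i\<in>S. c i *\<^sub>R w i)"
    using P S disj by (rule sum.union_disjoint)
  also have "(\<Sum>i\<in>P. c i *\<^sub>R w i) = (\<Sum>i\<in>P. \<mu> i *\<^sub>R w i)"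
    by (rule sum.cong) (simp_all add: c_def)
  also have "(\<Sum>i\<in>S. c i *\<^sub>R w i) = z"
    unfolding z_eq using disj by (intro sum.cong) (auto simp: c_def)
  finally have sum_eq: "(\<Sum>i\<in>P \<union> S. c i *\<^sub>R w i) = (\<Sum>i\<in>P. \<mu> i *\<^sub>R w i) + z" .
  have "\<forall>i\<in>P. c i \<ge> 0" using \<mu> by (simp add: c_def)
  from conic_combination_reduce[OF P S disj nd this] obtain K c' where
    "K \<subseteq> P" "\<forall>i\<in>K. c' i \<ge> 0" "\<not> fam_lin_dep w (K \<union> S)"
    "(\<Sum>i\<in>K \<union> S. c' i *\<^sub>R w i) = (\<Sum>i\<in>P \<union> S. c i *\<^sub>R w i)"
    by blast
  then show ?thesis using sum_eq by (intro exI[of _ K] exI[of _ c']) simp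
qed

section \<open>Limits of normalised linear combinations\<close>

lemma bounded_coords_convergent_subseq:
  fixes d :: "nat \<Rightarrow> nat \<Rightarrow> real"
  assumes "finite F" and "\<forall>k. \<forall>i\<in>F. \<bar>d k i\<bar> \<le> B"
  shows "\<exists>\<sigma>. strict_mono \<sigma> \<and> (\<forall>i\<in>F. convergent (\<lambda>k. d (\<sigma> k) i))"
  using assms
proof (induction F rule: finite_induct)
  case empty
  show ?case using strict_mono_id by blast
next
  case (insert i F)
  then obtain \<sigma> where \<sigma>: "strict_mono \<sigma>" and conv: "\<forall>j\<in>F. convergent (\<lambda>k. d (\<sigma> k) j)"
    by blast
  have "\<forall>k. d (\<sigma> k) i \<in> cball 0 B" using insert.prems by (simp add: dist_real_def)
  from seq_compactE[OF compact_imp_seq_compact[OF compact_cball] this]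
  obtain L \<sigma>' where \<sigma>': "strict_mono \<sigma>'" and "((\<lambda>k. d (\<sigma> k) i) \<circ> \<sigma>') \<longlonglongrightarrow> L"
    by blast
  then have L: "(\<lambda>k. d (\<sigma> (\<sigma>' k)) i) \<longlonglongrightarrow> L" by (simp add: o_def)
  have "convergent (\<lambda>k. d (\<sigma> (\<sigma>' k)) j)" if j: "j \<in> F" for j
  proof -
    obtain M where "(\<lambda>k. d (\<sigma> k) j) \<longlonglongrightarrow> M" using conv j by (auto simp: convergent_def)
    from LIMSEQ_subseq_LIMSEQ[OF this \<sigma>'] show ?thesis by (auto simp: convergent_def o_def)
  qed
  then show ?case
    using strict_mono_o[OF \<sigma> \<sigma>'] L by (intro exI[of _ "\<sigma> \<circ> \<sigma>'"]) (auto simp: convergent_def o_def)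
qed

lemma frequently_imp_strict_mono_subseq:
  assumes "frequently P sequentially"
  shows "\<exists>\<sigma> :: nat \<Rightarrow> nat. strict_mono \<sigma> \<and> (\<forall>k. P (\<sigma> k))"
proof -
  have "infinite {k. P k}"
    using assms by (simp add: frequently_cofinite[symmetric] cofinite_eq_sequentially)
  from infinite_enumerate[OF this] obtain \<sigma> :: "nat \<Rightarrow> nat"
    where "strict_mono \<sigma>" "\<forall>k. \<sigma> k \<in> {k. P k}" by blast
  then show ?thesis by blast
qed

lemma unit_combination_limit:
  fixes u :: "nat \<Rightarrow> nat \<Rightarrow> 'a::real_normed_vector"
  assumes F: "finite F" and F1: "F1 \<subseteq> F"
    and u: "\<forall>i\<in>F. (\<lambda>k. u k i) \<longlonglongrightarrow> u0 i"
    and unit: "\<forall>k. (\<Sum>i\<in>F. \<bar>d k i\<bar>) = 1" and pos: "\<forall>k. \<forall>i\<in>F1. d k i \<ge> 0"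
    and small: "(\<lambda>k. \<Sum>i\<in>F. d k i *\<^sub>R u k i) \<longlonglongrightarrow> 0"
  shows "\<exists>d0. (\<exists>i\<in>F. d0 i \<noteq> 0) \<and> (\<forall>i\<in>F1. d0 i \<ge> 0) \<and> (\<Sum>i\<in>F. d0 i *\<^sub>R u0 i) = 0"
proof -
  have "\<bar>d k i\<bar> \<le> 1" if "i \<in> F" for k i
    using member_le_sum[of i F "\<lambda>i. \<bar>d k i\<bar>"] unit F that by simp
  then obtain \<sigma> where \<sigma>: "strict_mono \<sigma>" and conv: "\<forall>i\<in>F. convergent (\<lambda>k. d (\<sigma> k) i)"
    using bounded_coords_convergent_subseq[OF F] by blast
  define d0 where "d0 i = lim (\<lambda>k. d (\<sigma> k) i)" for i
  have d0: "(\<lambda>k. d (\<sigma> k) i) \<longlonglongrightarrow> d0 i" if "i \<in> F" for i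
    using conv that by (simp add: d0_def convergent_LIMSEQ_iff)
  have "(\<lambda>k. \<Sum>i\<in>F. \<bar>d (\<sigma> k) i\<bar>) \<longlonglongrightarrow> (\<Sum>i\<in>F. \<bar>d0 i\<bar>)"
    by (intro tendsto_sum tendsto_rabs d0)
  then have "(\<Sum>i\<in>F. \<bar>d0 i\<bar>) = 1" using unit by (simp add: LIMSEQ_const_iff)
  then have "\<exists>i\<in>F. d0 i \<noteq> 0" by (metis (mono_tags) abs_zero sum.neutral zero_neq_one)
  moreover have "d0 i \<ge> 0" if "i \<in> F1" for i
  proof (rule LIMSEQ_le_const)
    show "(\<lambda>k. d (\<sigma> k) i) \<longlonglongrightarrow> d0 i" using d0 that F1 by blast
    show "\<exists>N. \<forall>k\<ge>N. 0 \<le> d (\<sigma> k) i" using pos that by blast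
  qed
  moreover have "(\<Sum>i\<in>F. d0 i *\<^sub>R u0 i) = 0"
  proof (rule LIMSEQ_unique)
    have "(\<lambda>k. u (\<sigma> k) i) \<longlonglongrightarrow> u0 i" if "i \<in> F" for i
      using LIMSEQ_subseq_LIMSEQ[OF u[rule_format, OF that] \<sigma>] by (simp add: o_def)
    then show "(\<lambda>k. \<Sum>i\<in>F. d (\<sigma> k) i *\<^sub>R u (\<sigma> k) i) \<longlonglongrightarrow> (\<Sum>i\<in>F. d0 i *\<^sub>R u0 i)"
      by (intro tendsto_sum tendsto_scaleR d0)
    show "(\<lambda>k. \<Sum>i\<in>F. d (\<sigma> k) i *\<^sub>R u (\<sigma> k) i) \<longlonglongrightarrow> 0"
      using LIMSEQ_subseq_LIMSEQ[OF small \<sigma>] by (simp add: o_def)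
  qed
  ultimately show ?thesis by blast
qed

lemma normalized_combination_limit:
  fixes u :: "nat \<Rightarrow> nat \<Rightarrow> 'a::real_normed_vector"
  assumes F: "finite F" and F1: "F1 \<subseteq> F"
    and u: "\<forall>i\<in>F. (\<lambda>k. u k i) \<longlonglongrightarrow> u0 i"
    and nz: "\<forall>k. 0 < (\<Sum>i\<in>F. \<bar>c k i\<bar>)" and pos: "\<forall>k. \<forall>i\<in>F1. c k i \<ge> 0"
    and small: "(\<lambda>k. norm (\<Sum>i\<in>F. c k i *\<^sub>R u k i) / (\<Sum>i\<in>F. \<bar>c k i\<bar>)) \<longlonglongrightarrow> 0"
  shows "\<exists>c0. (\<exists>i\<in>F. c0 i \<noteq> 0) \<and> (\<forall>i\<in>F1. c0 i \<ge> 0) \<and> (\<Sum>i\<in>F. c0 i *\<^sub>R u0 i) = 0"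
proof (rule unit_combination_limit[OF F F1 u])
  define N where "N k = (\<Sum>i\<in>F. \<bar>c k i\<bar>)" for k
  have N: "N k > 0" for k using nz by (simp add: N_def)
  show "\<forall>k. (\<Sum>i\<in>F. \<bar>c k i / N k\<bar>) = 1"
  proof
    fix k
    have "(\<Sum>i\<in>F. \<bar>c k i / N k\<bar>) = (\<Sum>i\<in>F. \<bar>c k i\<bar>) / N k"
      using N[of k] by (simp add: abs_divide sum_divide_distrib)
    then show "(\<Sum>i\<in>F. \<bar>c k i / N k\<bar>) = 1" using N[of k] by (simp add: N_def)
  qed
  show "\<forall>k. \<forall>i\<in>F1. c k i / N k \<ge> 0"
    using N pos by (simp add: divide_nonneg_pos)
  have "(\<Sum>i\<in>F. (c k i / N k) *\<^sub>R u k i) = inverse (N k) *\<^sub>R (\<Sum>i\<in>F. c k i *\<^sub>R u k i)" for k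
    by (simp add: scaleR_sum_right divide_inverse mult.commute)
  then have norm_eq: "norm (\<Sum>i\<in>F. (c k i / N k) *\<^sub>R u k i) = norm (\<Sum>i\<in>F. c k i *\<^sub>R u k i) / N k" for k
    using N[of k] by (simp add: divide_inverse mult.commute)
  have "(\<lambda>k. norm (\<Sum>i\<in>F. (c k i / N k) *\<^sub>R u k i)) \<longlonglongrightarrow> 0"
    using small unfolding N_def[symmetric] norm_eq .
  then show "(\<lambda>k. \<Sum>i\<in>F. (c k i / N k) *\<^sub>R u k i) \<longlonglongrightarrow> 0"
    by (rule tendsto_norm_zero_cancel)
qed

lemma eventually_not_fam_lin_dep:
  fixes u :: "nat \<Rightarrow> nat \<Rightarrow> 'a::real_normed_vector"
  assumes S: "finite S" and u: "\<forall>i\<in>S. (\<lambda>k. u k i) \<longlonglongrightarrow> u0 i" and nd: "\<not> fam_lin_dep u0 S"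
  shows "eventually (\<lambda>k. \<not> fam_lin_dep (u k) S) sequentially"
proof (rule ccontr)
  assume "\<not> ?thesis"
  then have "frequently (\<lambda>k. fam_lin_dep (u k) S) sequentially" by (simp add: not_eventually)
  from frequently_imp_strict_mono_subseq[OF this] obtain \<sigma> :: "nat \<Rightarrow> nat"
    where \<sigma>: "strict_mono \<sigma>" and dep: "\<forall>k. fam_lin_dep (u (\<sigma> k)) S"
    by blast
  then have "\<forall>k. \<exists>c. (\<exists>i\<in>S. c i \<noteq> 0) \<and> (\<Sum>i\<in>S. c i *\<^sub>R u (\<sigma> k) i) = 0"
    by (simp add: fam_lin_dep_def)
  from choice[OF this] obtain c where c_nz: "\<forall>k. \<exists>i\<in>S. c k i \<noteq> 0"
    and c_sum: "\<forall>k. (\<Sum>i\<in>S. c k i *\<^sub>R u (\<sigma> k) i) = 0"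
    by blast
  have nz: "\<forall>k. 0 < (\<Sum>i\<in>S. \<bar>c k i\<bar>)"
  proof
    fix k
    obtain i where "i \<in> S" "c k i \<noteq> 0" using c_nz by blast
    then show "0 < (\<Sum>i\<in>S. \<bar>c k i\<bar>)" using S by (intro sum_pos2[of S i]) auto
  qed
  have conv: "\<forall>i\<in>S. (\<lambda>k. u (\<sigma> k) i) \<longlonglongrightarrow> u0 i"
    using u LIMSEQ_subseq_LIMSEQ[OF _ \<sigma>] by (auto simp: o_def)
  have small: "(\<lambda>k. norm (\<Sum>i\<in>S. c k i *\<^sub>R u (\<sigma> k) i) / (\<Sum>i\<in>S. \<bar>c k i\<bar>)) \<longlonglongrightarrow> 0"
    using c_sum by simp
  obtain c0 where "\<exists>i\<in>S. c0 i \<noteq> 0" "(\<Sum>i\<in>S. c0 i *\<^sub>R u0 i) = 0"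
    using normalized_combination_limit[OF S empty_subsetI conv nz _ small] by blast
  then show False using nd unfolding fam_lin_dep_def by blast
qed

lemma pos_lin_dep_of_vanishing_residuals:
  fixes u :: "nat \<Rightarrow> nat \<Rightarrow> 'a::real_normed_vector"
  assumes P: "finite P" and S: "finite S" and disj: "P \<inter> S = {}"
    and K: "\<forall>k. K k \<subseteq> P" and pos: "\<forall>k. \<forall>i\<in>K k. c k i \<ge> 0"
    and u: "\<forall>i\<in>P \<union> S. (\<lambda>k. u k i) \<longlonglongrightarrow> u0 i"
    and nz: "\<forall>k. 0 < (\<Sum>i\<in>K k \<union> S. \<bar>c k i\<bar>)"
    and small: "(\<lambda>k. norm (\<Sum>i\<in>K k \<union> S. c k i *\<^sub>R u k i) / (\<Sum>i\<in>K k \<union> S. \<bar>c k i\<bar>)) \<longlonglongrightarrow> 0"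
  shows "\<exists>K0 \<sigma>. strict_mono (\<sigma> :: nat \<Rightarrow> nat) \<and> (\<forall>k. K (\<sigma> k) = K0) \<and> pos_lin_dep u0 K0 u0 S"
proof -
  have "range K \<subseteq> Pow P" using K by auto
  then have "finite (range K)" using P by (simp add: finite_subset)
  then obtain K0 where "infinite (K -` {K0})"
    using inf_img_fin_dom[OF _ infinite_UNIV_nat] by blast
  from infinite_enumerate[OF this] obtain \<sigma> :: "nat \<Rightarrow> nat"
    where \<sigma>: "strict_mono \<sigma>" and K\<sigma>: "\<forall>k. K (\<sigma> k) = K0" by auto
  have K0: "K0 \<subseteq> P" using K[rule_format, of "\<sigma> 0"] K\<sigma> by simp
  have fin: "finite (K0 \<union> S)" using finite_subset[OF K0 P] S by blast
  have conv: "\<forall>i\<in>K0 \<union> S. (\<lambda>k. u (\<sigma> k) i) \<longlonglongrightarrow> u0 i"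
    using u K0 LIMSEQ_subseq_LIMSEQ[OF _ \<sigma>] by (auto simp: o_def)
  have nz': "\<forall>k. 0 < (\<Sum>i\<in>K0 \<union> S. \<bar>c (\<sigma> k) i\<bar>)"
    using nz K\<sigma> by auto
  have pos': "\<forall>k. \<forall>i\<in>K0. c (\<sigma> k) i \<ge> 0"
    using pos K\<sigma> by auto
  have small': "(\<lambda>k. norm (\<Sum>i\<in>K0 \<union> S. c (\<sigma> k) i *\<^sub>R u (\<sigma> k) i) / (\<Sum>i\<in>K0 \<union> S. \<bar>c (\<sigma> k) i\<bar>)) \<longlonglongrightarrow> 0"
    using LIMSEQ_subseq_LIMSEQ[OF small \<sigma>] K\<sigma> by (simp add: o_def)
  obtain c0 where c0_nz: "\<exists>i\<in>K0 \<union> S. c0 i \<noteq> 0" and c0_pos: "\<forall>i\<in>K0. c0 i \<ge> 0"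
    and c0_sum: "(\<Sum>i\<in>K0 \<union> S. c0 i *\<^sub>R u0 i) = 0"
    using normalized_combination_limit[OF fin Un_upper1 conv nz' pos' small'] by blast
  have "(\<Sum>i\<in>K0 \<union> S. c0 i *\<^sub>R u0 i) = (\<Sum>i\<in>K0. c0 i *\<^sub>R u0 i) + (\<Sum>i\<in>S. c0 i *\<^sub>R u0 i)"
    using finite_subset[OF K0 P] S disj K0 by (intro sum.union_disjoint) auto
  then have "pos_lin_dep u0 K0 u0 S"
    unfolding pos_lin_dep_def using c0_nz c0_pos c0_sum by (intro exI[of _ c0]) auto
  then show ?thesis using \<sigma> K\<sigma> by (intro exI[of _ K0] exI[of _ \<sigma>]) simp
qed

section \<open>Gradients\<close>

lemma linear_real_eq_inner:
  fixes D :: "'a::euclidean_space \<Rightarrow> real"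
  assumes "linear D"
  shows "D v = (\<Sum>b\<in>Basis. D b *\<^sub>R b) \<bullet> v"
proof -
  have "D v = (\<Sum>b\<in>Basis. D b * (b \<bullet> v))"
    using Linear_Algebra.linear_componentwise[OF assms, of v 1] by (simp add: inner_commute mult.commute)
  also have "\<dots> = (\<Sum>b\<in>Basis. D b *\<^sub>R b) \<bullet> v"
    by (simp add: inner_sum_left)
  finally show ?thesis .
qed

lemma grad_y_has_derivative:
  fixes f :: "'x \<Rightarrow> 'a::euclidean_space \<Rightarrow> ereal"
  assumes "(\<lambda>z. real_of_ereal (f x z)) differentiable (at y)"
  shows "((\<lambda>z. real_of_ereal (f x z)) has_derivative (\<lambda>v. grad_y f x y \<bullet> v)) (at y)"
proof -
  obtain D where D: "((\<lambda>z. real_of_ereal (f x z)) has_derivative D) (at y)"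
    using assms unfolding differentiable_def by blast
  then have "D = (\<lambda>v. (\<Sum>b\<in>Basis. D b *\<^sub>R b) \<bullet> v)"
    using linear_real_eq_inner[OF has_derivative_linear] by blast
  then show ?thesis
    using D unfolding grad_y_def by (metis (mono_tags, lifting) someI_ex)
qed

lemma gradient_unique:
  fixes g :: "'a::euclidean_space \<Rightarrow> real"
  assumes "(g has_derivative (\<lambda>v. G1 \<bullet> v)) (at y)" and "(g has_derivative (\<lambda>v. G2 \<bullet> v)) (at y)"
  shows "G1 = G2"
proof -
  have "(\<lambda>v. G1 \<bullet> v) = (\<lambda>v. G2 \<bullet> v)" by (rule has_derivative_unique[OF assms])
  then have "G1 \<bullet> (G1 - G2) = G2 \<bullet> (G1 - G2)" by metis
  then have "(G1 - G2) \<bullet> (G1 - G2) = 0" by (simp add: inner_diff_left inner_commute)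
  then show ?thesis by simp
qed

lemma affine_gradient:
  fixes g :: "'a::euclidean_space \<Rightarrow> real"
  assumes "\<forall>y. g y = a \<bullet> y + b" and "(g has_derivative (\<lambda>v. G \<bullet> v)) (at y)"
  shows "G = a"
proof -
  have "(g has_derivative (\<lambda>v. a \<bullet> v)) (at y)"
    using assms(1) by (subst ext[of g]) (auto intro!: derivative_eq_intros)
  with assms(2) show ?thesis by (rule gradient_unique)
qed

lemma line_has_real_derivative:
  fixes g :: "'a::real_inner \<Rightarrow> real"
  assumes "(g has_derivative (\<lambda>v. G \<bullet> v)) (at y)"
  shows "((\<lambda>t. g (y + t *\<^sub>R d)) has_real_derivative (G \<bullet> d)) (at 0)"
proof -
  have "((\<lambda>t. y + t *\<^sub>R d) has_derivative (\<lambda>t. t *\<^sub>R d)) (at 0)"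
    by (auto intro!: derivative_eq_intros)
  moreover have "(g has_derivative (\<lambda>v. G \<bullet> v)) (at (y + 0 *\<^sub>R d))" using assms by simp
  ultimately have "((\<lambda>t. g (y + t *\<^sub>R d)) has_derivative (\<lambda>t. G \<bullet> (t *\<^sub>R d))) (at 0)"
    by (rule has_derivative_compose)
  moreover have "(\<lambda>t. G \<bullet> (t *\<^sub>R d)) = (*) (G \<bullet> d)" by auto
  ultimately show ?thesis by (simp add: has_field_derivative_def)
qed

lemma convex_on_gradient_ineq:
  fixes f :: "'a::real_inner \<Rightarrow> real"
  assumes cvx: "convex_on UNIV f" and der: "(f has_derivative (\<lambda>v. G \<bullet> v)) (at y)"
  shows "f y + G \<bullet> (z - y) \<le> f z"
proof -
  define \<psi> where "\<psi> t = f (y + t *\<^sub>R (z - y))" for t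
  have "convex_on UNIV \<psi>"
  proof (rule convex_onI)
    fix t s1 s2 :: real assume t: "0 < t" "t < 1"
    have "y + ((1 - t) * s1 + t * s2) *\<^sub>R (z - y) =
        (1 - t) *\<^sub>R (y + s1 *\<^sub>R (z - y)) + t *\<^sub>R (y + s2 *\<^sub>R (z - y))"
      by (simp add: algebra_simps)
    then show "\<psi> ((1 - t) *\<^sub>R s1 + t *\<^sub>R s2) \<le> (1 - t) * \<psi> s1 + t * \<psi> s2"
      using t convex_onD[OF cvx, of t] by (simp add: \<psi>_def)
  qed simp
  moreover have "(\<psi> has_field_derivative (G \<bullet> (z - y))) (at 0)"
    unfolding \<psi>_def by (rule line_has_real_derivative[OF der])
  ultimately have "G \<bullet> (z - y) * (1 - 0) \<le> \<psi> 1 - \<psi> 0"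
    by (intro convex_on_imp_above_tangent[where A = UNIV]) auto
  then show ?thesis by (simp add: \<psi>_def)
qed

lemma eventually_less_at_right:
  fixes \<psi> :: "real \<Rightarrow> real"
  assumes der: "(\<psi> has_real_derivative D) (at 0)" and le: "\<psi> 0 \<le> m" and neg: "\<psi> 0 = m \<Longrightarrow> D < 0"
  shows "eventually (\<lambda>t. \<psi> t < m) (at_right 0)"
proof (cases "\<psi> 0 = m")
  case True
  obtain \<delta> where "\<delta> > 0" "\<forall>t>0. t < \<delta> \<longrightarrow> \<psi> t < \<psi> 0"
    using DERIV_neg_dec_right[OF der neg[OF True]] by auto
  then show ?thesis using True unfolding eventually_at_right_field by auto
next
  case False
  have "(\<psi> \<longlongrightarrow> \<psi> 0) (at_right 0)"
    using DERIV_isCont[OF der] by (simp add: isCont_def filterlim_at_split)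
  then show ?thesis using False le by (intro order_tendstoD(2)) auto
qed

section \<open>The merit function of a convex constraint system\<close>

definition convex_constraints :: "nat \<Rightarrow> nat \<Rightarrow> (nat \<Rightarrow> 'b::real_inner \<Rightarrow> real) \<Rightarrow> bool" where
  "convex_constraints l p f \<longleftrightarrow>
    (\<forall>c\<in>{1..l}. convex_on UNIV (f c)) \<and> (\<forall>c\<in>{l+1..p}. \<exists>a b. \<forall>y. f c y = a \<bullet> y + b)"

definition violation :: "nat \<Rightarrow> (nat \<Rightarrow> 'b \<Rightarrow> real) \<Rightarrow> nat \<Rightarrow> 'b \<Rightarrow> real" where
  "violation l f c y = (if c \<le> l then f c y else \<bar>f c y\<bar>)"

definition merit :: "nat \<Rightarrow> nat \<Rightarrow> (nat \<Rightarrow> 'b \<Rightarrow> real) \<Rightarrow> 'b \<Rightarrow> real" where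
  "merit l p f y = Max (insert 0 ((\<lambda>c. violation l f c y) ` {1..p}))"

definition violation_grad :: "nat \<Rightarrow> (nat \<Rightarrow> 'b \<Rightarrow> real) \<Rightarrow> (nat \<Rightarrow> 'b \<Rightarrow> 'b::real_vector) \<Rightarrow> nat \<Rightarrow> 'b \<Rightarrow> 'b" where
  "violation_grad l f gr c y = (if c \<le> l then 1 else sgn (f c y)) *\<^sub>R gr c y"

text \<open>KKT conditions at \<open>y\<close> for minimising the merit function over a closed ball centred at
  \<open>yb\<close>, with the ball constraint active: \<open>\<tau>\<close> is its multiplier, \<open>\<mu>\<close> those of the constraints.\<close>

definition merit_ball_kkt ::
    "nat \<Rightarrow> nat \<Rightarrow> (nat \<Rightarrow> 'b \<Rightarrow> real) \<Rightarrow> (nat \<Rightarrow> 'b \<Rightarrow> 'b::real_vector) \<Rightarrow> 'b \<Rightarrow> 'b \<Rightarrow> bool" where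
  "merit_ball_kkt l p f gr yb y \<longleftrightarrow> (\<exists>\<mu> \<tau>. 0 < \<tau> \<and>
    (\<forall>c\<in>{1..l}. 0 \<le> \<mu> c \<and> (\<mu> c \<noteq> 0 \<longrightarrow> f c y = merit l p f y)) \<and>
    (\<Sum>c\<in>{1..p}. \<mu> c *\<^sub>R gr c y) = - (\<tau> *\<^sub>R (y - yb)))"

lemma convex_constraintsD:
  assumes "convex_constraints l p f"
  shows "c \<in> {1..l} \<Longrightarrow> convex_on UNIV (f c)"
    and "c \<in> {l+1..p} \<Longrightarrow> \<exists>a b. \<forall>y. f c y = a \<bullet> y + b"
  using assms by (auto simp: convex_constraints_def)

lemma violation_le_merit: "c \<in> {1..p} \<Longrightarrow> violation l f c y \<le> merit l p f y"
  unfolding merit_def by (intro Max_ge) auto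

lemma merit_nonneg: "0 \<le> merit l p f y"
  unfolding merit_def by (intro Max_ge) auto

lemma merit_less_iff: "merit l p f y < m \<longleftrightarrow> 0 < m \<and> (\<forall>c\<in>{1..p}. violation l f c y < m)"
  unfolding merit_def by (subst Max_less_iff) auto

lemma merit_le_iff: "merit l p f y \<le> m \<longleftrightarrow> 0 \<le> m \<and> (\<forall>c\<in>{1..p}. violation l f c y \<le> m)"
  unfolding merit_def by (subst Max_le_iff) auto

lemma tendsto_Max_insert:
  fixes g :: "'i \<Rightarrow> 'a \<Rightarrow> 'b::linorder_topology"
  assumes "finite C" and "\<And>c. c \<in> C \<Longrightarrow> (g c \<longlongrightarrow> L c) F"
  shows "((\<lambda>x. Max (insert a ((\<lambda>c. g c x) ` C))) \<longlongrightarrow> Max (insert a (L ` C))) F"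
  using assms
proof (induction C rule: finite_induct)
  case (insert c C)
  have Max_eq: "Max (insert a (h ` insert c C)) = max (h c) (Max (insert a (h ` C)))" for h :: "'i \<Rightarrow> 'b"
  proof -
    have "insert a (h ` insert c C) = insert (h c) (insert a (h ` C))" by auto
    then show ?thesis using insert.hyps(1) by (simp only:) (rule Max_insert; simp)
  qed
  show ?case
    unfolding Max_eq[where h = "\<lambda>c. g c x" for x] Max_eq[of L]
    using insert by (intro tendsto_max) auto
qed simp

lemma tendsto_merit:
  assumes "\<forall>c\<in>{1..p}. ((\<lambda>x. f x c (y x)) \<longlongrightarrow> f0 c y0) F"
  shows "((\<lambda>x. merit l p (f x) (y x)) \<longlongrightarrow> merit l p f0 y0) F"
  unfolding merit_def
proof (rule tendsto_Max_insert)
  fix c assume "c \<in> {1..p}"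
  then show "((\<lambda>x. violation l (f x) c (y x)) \<longlongrightarrow> violation l f0 c y0) F"
    using assms unfolding violation_def by (auto intro: tendsto_rabs)
qed simp

lemma continuous_on_merit:
  assumes "\<forall>c\<in>{1..p}. continuous_on S (f c)"
  shows "continuous_on S (merit l p f)"
  using assms unfolding continuous_on_def by (auto intro: tendsto_merit)

lemma convex_on_merit:
  fixes f :: "nat \<Rightarrow> 'b::real_inner \<Rightarrow> real"
  assumes "convex_constraints l p f"
  shows "convex_on UNIV (merit l p f)"
proof (rule convex_onI)
  fix t :: real and x y :: 'b assume t: "0 < t" "t < 1"
  let ?z = "(1 - t) *\<^sub>R x + t *\<^sub>R y"
  have "violation l f c ?z \<le> (1 - t) * merit l p f x + t * merit l p f y" if c: "c \<in> {1..p}" for c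
  proof -
    have "violation l f c ?z \<le> (1 - t) * violation l f c x + t * violation l f c y"
    proof (cases "c \<le> l")
      case True
      then have "convex_on UNIV (f c)" using convex_constraintsD(1)[OF assms] c by simp
      then show ?thesis using True t by (simp add: violation_def convex_onD)
    next
      case False
      then obtain a b where "\<forall>y. f c y = a \<bullet> y + b" using convex_constraintsD(2)[OF assms] c by force
      then have "f c ?z = (1 - t) * f c x + t * f c y" by (simp add: inner_add_right algebra_simps)
      then have "\<bar>f c ?z\<bar> \<le> (1 - t) * \<bar>f c x\<bar> + t * \<bar>f c y\<bar>"
        using t by (simp add: abs_triangle_ineq[THEN order_trans] abs_mult)
      then show ?thesis using False by (simp add: violation_def)
    qed
    also have "\<dots> \<le> (1 - t) * merit l p f x + t * merit l p f y"
      using t violation_le_merit[OF c] by (intro add_mono mult_left_mono) auto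
    finally show ?thesis .
  qed
  moreover have "0 \<le> (1 - t) * merit l p f x + t * merit l p f y"
    using t merit_nonneg[of l p f x] merit_nonneg[of l p f y] by simp
  ultimately show "merit l p f ?z \<le> (1 - t) * merit l p f x + t * merit l p f y"
    by (simp add: merit_le_iff)
qed simp

lemma violation_grad_inner_le:
  fixes f :: "nat \<Rightarrow> 'b::euclidean_space \<Rightarrow> real"
  assumes "convex_constraints l p f" and c: "c \<in> {1..p}"
    and der: "(f c has_derivative (\<lambda>v. gr c y \<bullet> v)) (at y)"
  shows "violation_grad l f gr c y \<bullet> (z - y) \<le> violation l f c z - violation l f c y"
proof (cases "c \<le> l")
  case True
  then have "convex_on UNIV (f c)" using convex_constraintsD(1)[OF assms(1)] c by simp
  from convex_on_gradient_ineq[OF this der, of z] show ?thesis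
    using True by (simp add: violation_grad_def violation_def)
next
  case False
  then obtain a b where ab: "\<forall>y. f c y = a \<bullet> y + b" using convex_constraintsD(2)[OF assms(1)] c by force
  have "gr c y \<bullet> (z - y) = f c z - f c y" using affine_gradient[OF ab der] ab by (simp add: inner_diff_right)
  moreover have "sgn s * (t - s) \<le> \<bar>t\<bar> - \<bar>s\<bar>" for s t :: real
    by (cases s rule: linorder_cases) (auto simp: sgn_if)
  ultimately show ?thesis using False by (simp add: violation_grad_def violation_def)
qed

lemma violation_eventually_less:
  fixes f :: "nat \<Rightarrow> 'b::real_inner \<Rightarrow> real"
  assumes der: "(f c has_derivative (\<lambda>v. gr c y \<bullet> v)) (at y)"
    and le: "violation l f c y \<le> m" and m: "0 < m"
    and dec: "violation l f c y = m \<Longrightarrow> violation_grad l f gr c y \<bullet> d < 0"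
  shows "eventually (\<lambda>t. violation l f c (y + t *\<^sub>R d) < m) (at_right 0)"
proof -
  have q: "((\<lambda>t. f c (y + t *\<^sub>R d)) has_real_derivative (gr c y \<bullet> d)) (at 0)"
    using der by (rule line_has_real_derivative)
  have up: "eventually (\<lambda>t. f c (y + t *\<^sub>R d) < m) (at_right 0)"
  proof (rule eventually_less_at_right[OF q])
    show "f c (y + 0 *\<^sub>R d) \<le> m" using le by (simp add: violation_def split: if_splits)
    assume "f c (y + 0 *\<^sub>R d) = m"
    then show "gr c y \<bullet> d < 0" using dec m by (cases "c \<le> l") (auto simp: violation_def violation_grad_def)
  qed
  show ?thesis
  proof (cases "c \<le> l")
    case True
    then show ?thesis using up by (simp add: violation_def)
  next
    case False
    have down: "eventually (\<lambda>t. - f c (y + t *\<^sub>R d) < m) (at_right 0)"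
    proof (rule eventually_less_at_right[OF DERIV_minus[OF q]])
      show "- f c (y + 0 *\<^sub>R d) \<le> m" using le False by (simp add: violation_def)
      assume "- f c (y + 0 *\<^sub>R d) = m"
      then show "- (gr c y \<bullet> d) < 0" using dec False m by (simp add: violation_def violation_grad_def)
    qed
    show ?thesis using eventually_conj[OF up down] by eventually_elim (use False in \<open>simp add: violation_def abs_less_iff\<close>)
  qed
qed

lemma merit_eventually_less:
  assumes der: "\<forall>c\<in>{1..p}. (f c has_derivative (\<lambda>v. gr c y \<bullet> v)) (at y)"
    and pos: "0 < merit l p f y"
    and dec: "\<forall>c\<in>{1..p}. violation l f c y = merit l p f y \<longrightarrow> violation_grad l f gr c y \<bullet> d < 0"
  shows "eventually (\<lambda>t. merit l p f (y + t *\<^sub>R d) < merit l p f y) (at_right 0)"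
proof -
  have "eventually (\<lambda>t. \<forall>c\<in>{1..p}. violation l f c (y + t *\<^sub>R d) < merit l p f y) (at_right 0)"
    using der dec pos
    by (intro eventually_ball_finite ballI violation_eventually_less) (auto simp: violation_le_merit)
  then show ?thesis by eventually_elim (use pos in \<open>simp add: merit_less_iff\<close>)
qed

lemma eventually_dist_less:
  fixes y yb d :: "'a::real_inner"
  assumes "(y - yb) \<bullet> d < 0"
  shows "eventually (\<lambda>t. dist yb (y + t *\<^sub>R d) < dist yb y) (at_right 0)"
proof -
  define e where "e = y - yb"
  have sq: "(dist yb (y + t *\<^sub>R d))\<^sup>2 = e \<bullet> e + t * (2 * (e \<bullet> d)) + t\<^sup>2 * (d \<bullet> d)" for t
  proof -
    have "dist yb (y + t *\<^sub>R d) = norm (e + t *\<^sub>R d)"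
      by (simp add: e_def dist_norm norm_minus_commute algebra_simps)
    then have "(dist yb (y + t *\<^sub>R d))\<^sup>2 = (e + t *\<^sub>R d) \<bullet> (e + t *\<^sub>R d)"
      by (simp only: power2_norm_eq_inner)
    then show ?thesis
      by (simp add: inner_add_left inner_add_right inner_commute power2_eq_square algebra_simps)
  qed
  have "((\<lambda>t. e \<bullet> e + t * (2 * (e \<bullet> d)) + t\<^sup>2 * (d \<bullet> d)) has_real_derivative (2 * (e \<bullet> d))) (at 0)"
    by (auto intro!: derivative_eq_intros)
  then have "eventually (\<lambda>t. e \<bullet> e + t * (2 * (e \<bullet> d)) + t\<^sup>2 * (d \<bullet> d) < e \<bullet> e) (at_right 0)"
    by (rule eventually_less_at_right) (use assms in \<open>simp_all add: e_def\<close>)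
  then show ?thesis
  proof eventually_elim
    case (elim t)
    then have "(dist yb (y + t *\<^sub>R d))\<^sup>2 < (dist yb y)\<^sup>2" using sq[of t] sq[of 0] by simp
    then show ?case by (rule power_less_imp_less_base) simp
  qed
qed

section \<open>Minimising the merit function over a ball\<close>

lemma convex_min_on_sphere:
  fixes F :: "'a::real_normed_vector \<Rightarrow> real"
  assumes cvx: "convex_on UNIV F" and ys: "ys \<in> cball yb r"
    and min: "\<forall>y\<in>cball yb r. F ys \<le> F y" and w: "F w < F ys"
  shows "dist yb ys = r"
proof (rule ccontr)
  assume "dist yb ys \<noteq> r"
  then have "dist yb ys < r" using ys by simp
  moreover have "((\<lambda>t. dist yb (ys + t *\<^sub>R (w - ys))) \<longlongrightarrow> dist yb (ys + 0 *\<^sub>R (w - ys))) (at_right 0)"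
    by (intro tendsto_intros)
  ultimately have "eventually (\<lambda>t. dist yb (ys + t *\<^sub>R (w - ys)) < r) (at_right 0)"
    by (intro order_tendstoD(2)) auto
  moreover have "eventually (\<lambda>t. t < 1) (at_right (0::real))"
    by (rule order_tendstoD(2)[OF tendsto_ident_at]) simp
  ultimately have "eventually (\<lambda>t. 0 < t \<and> t < 1 \<and> dist yb (ys + t *\<^sub>R (w - ys)) < r) (at_right 0)"
    using eventually_at_right_less[of 0] by eventually_elim auto
  then obtain t where t: "0 < t" "t < 1" and near: "dist yb (ys + t *\<^sub>R (w - ys)) < r"
    using eventually_happens'[OF trivial_limit_at_right_real] by blast
  define z where "z = (1 - t) *\<^sub>R ys + t *\<^sub>R w"
  have "z \<in> cball yb r" using near by (simp add: z_def algebra_simps)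
  then have "F ys \<le> F z" using min by blast
  moreover have "F z \<le> (1 - t) * F ys + t * F w"
    using t unfolding z_def by (intro convex_onD[OF cvx]) auto
  moreover have "(1 - t) * F ys + t * F w < F ys" using t w by (simp add: algebra_simps)
  ultimately show False by simp
qed

lemma convex_hull_image_sum:
  fixes V :: "'i \<Rightarrow> 'a::real_vector"
  assumes C: "finite C" and z: "z \<in> convex hull (V ` C)"
  shows "\<exists>w. (\<forall>c\<in>C. w c \<ge> 0) \<and> sum w C = 1 \<and> (\<Sum>c\<in>C. w c *\<^sub>R V c) = z"
proof -
  let ?H = "{y. \<exists>w. (\<forall>c\<in>C. w c \<ge> 0) \<and> sum w C = 1 \<and> (\<Sum>c\<in>C. w c *\<^sub>R V c) = y}"
  have "convex ?H"
    unfolding convex_def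
  proof (intro ballI allI impI)
    fix x y and u v :: real assume "x \<in> ?H" "y \<in> ?H" and uv: "0 \<le> u" "0 \<le> v" "u + v = 1"
    then obtain a b where a: "\<forall>c\<in>C. a c \<ge> 0" "sum a C = 1" "(\<Sum>c\<in>C. a c *\<^sub>R V c) = x"
      and b: "\<forall>c\<in>C. b c \<ge> 0" "sum b C = 1" "(\<Sum>c\<in>C. b c *\<^sub>R V c) = y" by blast
    have "(\<Sum>c\<in>C. (u * a c + v * b c) *\<^sub>R V c) = u *\<^sub>R x + v *\<^sub>R y"
      unfolding a(3)[symmetric] b(3)[symmetric]
      by (simp add: scaleR_add_left sum.distrib scaleR_sum_right)
    moreover have "(\<Sum>c\<in>C. u * a c + v * b c) = 1"
      using a b uv by (simp add: sum.distrib flip: sum_distrib_left)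
    ultimately show "u *\<^sub>R x + v *\<^sub>R y \<in> ?H"
      using a b uv by (intro CollectI exI[of _ "\<lambda>c. u * a c + v * b c"]) simp
  qed
  moreover have "V ` C \<subseteq> ?H"
  proof
    fix y assume "y \<in> V ` C"
    then obtain j where j: "j \<in> C" "y = V j" by blast
    then show "y \<in> ?H"
      using C by (intro CollectI exI[of _ "\<lambda>i. if i = j then 1 else 0"])
        (simp add: if_distrib[of "\<lambda>a. a *\<^sub>R _"] sum.delta cong: if_cong)
  qed
  ultimately have "convex hull (V ` C) \<subseteq> ?H" by (rule hull_minimal[rotated])
  then show ?thesis using z by blast
qed

lemma zero_in_convex_hull_at_minimizer:
  fixes f :: "nat \<Rightarrow> 'b::euclidean_space \<Rightarrow> real"
  assumes der: "\<forall>c\<in>{1..p}. (f c has_derivative (\<lambda>v. gr c ys \<bullet> v)) (at ys)"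
    and ys: "ys \<in> cball yb r" and min: "\<forall>y\<in>cball yb r. merit l p f ys \<le> merit l p f y"
    and pos: "0 < merit l p f ys"
  shows "0 \<in> convex hull (insert (ys - yb)
    ((\<lambda>c. violation_grad l f gr c ys) ` {c\<in>{1..p}. violation l f c ys = merit l p f ys}))"
    (is "0 \<in> convex hull ?V")
proof (rule ccontr)
  assume "0 \<notin> convex hull ?V"
  moreover have "closed (convex hull ?V)"
    by (intro compact_imp_closed finite_imp_compact_convex_hull) auto
  ultimately obtain a b where "0 < b" and sep: "\<forall>x\<in>convex hull ?V. a \<bullet> x > b"
    using separating_hyperplane_closed_0[OF convex_convex_hull] by blast
  \<comment> \<open>\<open>-a\<close> is a descent direction for both the merit function and the distance to \<open>yb\<close>\<close>
  have desc: "v \<bullet> (- a) < 0" if "v \<in> ?V" for v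
    using sep hull_inc[OF that] \<open>0 < b\<close> by (fastforce simp: inner_commute)
  have "eventually (\<lambda>t. dist yb (ys + t *\<^sub>R - a) < dist yb ys) (at_right 0)"
    using desc by (intro eventually_dist_less) simp
  moreover have "eventually (\<lambda>t. merit l p f (ys + t *\<^sub>R - a) < merit l p f ys) (at_right 0)"
    using der pos desc by (intro merit_eventually_less) auto
  ultimately obtain t where "dist yb (ys + t *\<^sub>R - a) < dist yb ys"
    and "merit l p f (ys + t *\<^sub>R - a) < merit l p f ys"
    using eventually_happens'[OF trivial_limit_at_right_real eventually_conj] by blast
  moreover from this(1) have "ys + t *\<^sub>R - a \<in> cball yb r" using ys by simp
  ultimately show False using min by fastforce
qed

lemma active_violation_grads_inner_le:
  fixes f :: "nat \<Rightarrow> 'b::euclidean_space \<Rightarrow> real"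
  assumes cc: "convex_constraints l p f"
    and der: "\<forall>c\<in>{1..p}. (f c has_derivative (\<lambda>v. gr c ys \<bullet> v)) (at ys)"
    and T: "T \<subseteq> {c\<in>{1..p}. violation l f c ys = merit l p f ys}" and feas: "merit l p f w = 0"
    and lam: "\<forall>c\<in>T. 0 \<le> lam c" "sum lam T = 1"
  shows "(\<Sum>c\<in>T. lam c *\<^sub>R violation_grad l f gr c ys) \<bullet> (w - ys) \<le> - merit l p f ys"
proof -
  have bound: "violation_grad l f gr c ys \<bullet> (w - ys) \<le> - merit l p f ys" if c: "c \<in> T" for c
  proof -
    have "c \<in> {1..p}" using T c by blast
    then have "violation l f c w \<le> 0" using feas violation_le_merit[of c p l f w] by simp
    moreover have "violation_grad l f gr c ys \<bullet> (w - ys) \<le> violation l f c w - violation l f c ys"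
      using cc \<open>c \<in> {1..p}\<close> der by (intro violation_grad_inner_le) auto
    ultimately show ?thesis using T c by auto
  qed
  have "(\<Sum>c\<in>T. lam c *\<^sub>R violation_grad l f gr c ys) \<bullet> (w - ys) \<le> (\<Sum>c\<in>T. lam c * - merit l p f ys)"
    unfolding inner_sum_left
  proof (rule sum_mono)
    fix c assume "c \<in> T"
    then show "(lam c *\<^sub>R violation_grad l f gr c ys) \<bullet> (w - ys) \<le> lam c * - merit l p f ys"
      using mult_left_mono[OF bound, of c "lam c"] lam(1) by simp
  qed
  also have "\<dots> = - merit l p f ys" using lam(2) by (simp add: sum_negf flip: sum_distrib_right)
  finally show ?thesis .
qed

lemma merit_pos_imp_active:
  assumes "0 < merit l p f y"
  shows "\<exists>c\<in>{1..p}. violation l f c y = merit l p f y"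
proof -
  have "merit l p f y \<in> insert 0 ((\<lambda>c. violation l f c y) ` {1..p})"
    unfolding merit_def by (intro Max_in) auto
  then show ?thesis using assms by auto
qed

lemma ball_minimizer_kkt:
  fixes f :: "nat \<Rightarrow> 'b::euclidean_space \<Rightarrow> real" and gr :: "nat \<Rightarrow> 'b \<Rightarrow> 'b"
  assumes cc: "convex_constraints l p f"
    and der: "\<forall>c\<in>{1..p}. (f c has_derivative (\<lambda>v. gr c ys \<bullet> v)) (at ys)"
    and ys: "ys \<in> cball yb r" and min: "\<forall>y\<in>cball yb r. merit l p f ys \<le> merit l p f y"
    and pos: "0 < merit l p f ys" and feas: "merit l p f w = 0"
  shows "merit_ball_kkt l p f gr yb ys"
proof -
  define T where "T = {c\<in>{1..p}. violation l f c ys = merit l p f ys}"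
  define V where "V c = violation_grad l f gr c ys" for c
  have T: "finite T" "T \<subseteq> {1..p}" "T \<noteq> {}"
    using merit_pos_imp_active[OF pos] by (auto simp: T_def)
  obtain u v b where uv: "0 \<le> u" "0 \<le> v" "u + v = 1" and b: "b \<in> convex hull (V ` T)"
    and zero: "u *\<^sub>R (ys - yb) + v *\<^sub>R b = 0"
    using zero_in_convex_hull_at_minimizer[where gr = gr, OF der ys min pos] convex_hull_insert[of "V ` T"] T
    unfolding T_def V_def by auto
  obtain lam where lam: "\<forall>c\<in>T. 0 \<le> lam c" "sum lam T = 1" and b_eq: "(\<Sum>c\<in>T. lam c *\<^sub>R V c) = b"
    using convex_hull_image_sum[OF T(1) b] by blast
  have "b \<bullet> (w - ys) \<le> - merit l p f ys"
    using active_violation_grads_inner_le[where gr = gr, OF cc der _ feas lam] b_eq by (simp add: T_def V_def)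
  \<comment> \<open>the multiplier of the distance term is positive because a feasible point exists\<close>
  then have u: "u > 0" using uv zero pos by (cases "u = 0") auto
  define \<mu> where "\<mu> c = (if c \<in> T then v * lam c * (if c \<le> l then 1 else sgn (f c ys)) else 0)" for c
  have "(\<Sum>c\<in>{1..p}. \<mu> c *\<^sub>R gr c ys) = (\<Sum>c\<in>T. \<mu> c *\<^sub>R gr c ys)"
    using T by (intro sum.mono_neutral_right) (auto simp: \<mu>_def)
  also have "\<dots> = v *\<^sub>R b"
    unfolding b_eq[symmetric] scaleR_sum_right by (intro sum.cong) (auto simp: \<mu>_def V_def violation_grad_def)
  also have "\<dots> = - (u *\<^sub>R (ys - yb))" using zero by (simp add: eq_neg_iff_add_eq_0 add.commute)
  finally have "(\<Sum>c\<in>{1..p}. \<mu> c *\<^sub>R gr c ys) = - (u *\<^sub>R (ys - yb))" .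
  moreover have "0 \<le> \<mu> c \<and> (\<mu> c \<noteq> 0 \<longrightarrow> f c ys = merit l p f ys)" if "c \<in> {1..l}" for c
    using that uv lam(1) by (auto simp: \<mu>_def T_def violation_def)
  ultimately show ?thesis unfolding merit_ball_kkt_def using u by blast
qed

lemma merit_ball_kkt_on_sphere:
  fixes f :: "nat \<Rightarrow> 'b::euclidean_space \<Rightarrow> real" and gr :: "nat \<Rightarrow> 'b \<Rightarrow> 'b"
  assumes r: "0 < r" and cc: "convex_constraints l p f"
    and der: "\<forall>c\<in>{1..p}. \<forall>y\<in>cball yb r. (f c has_derivative (\<lambda>v. gr c y \<bullet> v)) (at y)"
    and feas: "merit l p f w = 0" and infeas: "\<forall>y\<in>cball yb r. 0 < merit l p f y"
  shows "\<exists>ys. dist yb ys = r \<and> 0 < merit l p f ys \<and> merit l p f ys \<le> merit l p f yb \<and>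
    merit_ball_kkt l p f gr yb ys"
proof -
  have "continuous_on (cball yb r) (f c)" if "c \<in> {1..p}" for c
  proof (intro continuous_at_imp_continuous_on ballI)
    fix y assume "y \<in> cball yb r"
    then show "isCont (f c) y" using der that has_derivative_continuous by blast
  qed
  then have "continuous_on (cball yb r) (merit l p f)" by (intro continuous_on_merit) blast
  moreover have "cball yb r \<noteq> {}" using r by simp
  ultimately obtain ys where ys: "ys \<in> cball yb r" and min: "\<forall>y\<in>cball yb r. merit l p f ys \<le> merit l p f y"
    using continuous_attains_inf[OF compact_cball] by blast
  have "merit l p f w < merit l p f ys" using feas infeas ys by simp
  then have "dist yb ys = r" using convex_min_on_sphere[OF convex_on_merit[OF cc] ys min] by blast
  moreover have "merit l p f ys \<le> merit l p f yb" using min r by simp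
  moreover have "\<forall>c\<in>{1..p}. (f c has_derivative (\<lambda>v. gr c ys \<bullet> v)) (at ys)" using der ys by blast
  ultimately show ?thesis
    using ball_minimizer_kkt[where gr = gr, OF cc _ ys min _ feas] infeas ys by blast
qed

lemma multiplier_estimate:
  fixes f :: "nat \<Rightarrow> 'b::euclidean_space \<Rightarrow> real" and gr :: "nat \<Rightarrow> 'b \<Rightarrow> 'b"
  assumes cc: "convex_constraints l p f"
    and der: "\<forall>c\<in>{1..p}. (f c has_derivative (\<lambda>v. gr c ys \<bullet> v)) (at ys)"
    and K: "K \<subseteq> {1..l}" and S: "S \<subseteq> {l+1..p}" and lp: "l \<le> p"
    and active: "\<forall>i\<in>K. f i ys = merit l p f ys" and c: "\<forall>i\<in>K. 0 \<le> c i"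
    and le: "merit l p f ys \<le> merit l p f yb"
  shows "(\<Sum>i\<in>K \<union> S. c i *\<^sub>R gr i ys) \<bullet> (yb - ys) \<le> 2 * merit l p f yb * (\<Sum>i\<in>K \<union> S. \<bar>c i\<bar>)"
proof -
  let ?F = "merit l p f"
  have bound: "c i * (gr i ys \<bullet> (yb - ys)) \<le> \<bar>c i\<bar> * (2 * ?F yb)" if i: "i \<in> K \<union> S" for i
  proof (cases "i \<in> K")
    case True
    then have ip: "i \<in> {1..p}" "i \<le> l" using K lp by auto
    have "gr i ys \<bullet> (yb - ys) \<le> violation l f i yb - violation l f i ys"
      using violation_grad_inner_le[where gr = gr, OF cc ip(1)] der ip
      by (simp add: violation_grad_def)
    also have "\<dots> \<le> ?F yb"
      using violation_le_merit[OF ip(1), of l f yb] active True ip merit_nonneg[of l p f ys]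
      by (simp add: violation_def)
    finally show ?thesis
      using c True merit_nonneg[of l p f yb] by (auto intro: order_trans[OF mult_left_mono])
  next
    case False
    then have ip: "i \<in> {1..p}" "\<not> i \<le> l" using i S by auto
    obtain a b where ab: "\<forall>y. f i y = a \<bullet> y + b" using convex_constraintsD(2)[OF cc] ip by force
    have "gr i ys = a" using affine_gradient[OF ab] der ip by blast
    then have eq: "gr i ys \<bullet> (yb - ys) = f i yb - f i ys" using ab by (simp add: inner_diff_right)
    have bnd: "\<bar>f i y\<bar> \<le> ?F y" for y
      using violation_le_merit[OF ip(1), of l f y] ip by (simp add: violation_def)
    have "\<bar>gr i ys \<bullet> (yb - ys)\<bar> \<le> 2 * ?F yb"
      using eq le bnd[of yb] bnd[of ys] abs_triangle_ineq4[of "f i yb" "f i ys"] by linarith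
    have "c i * (gr i ys \<bullet> (yb - ys)) \<le> \<bar>c i\<bar> * \<bar>gr i ys \<bullet> (yb - ys)\<bar>"
      by (metis abs_ge_self abs_mult)
    also have "\<dots> \<le> \<bar>c i\<bar> * (2 * ?F yb)"
      by (rule mult_left_mono) (use \<open>\<bar>gr i ys \<bullet> (yb - ys)\<bar> \<le> 2 * ?F yb\<close> in auto)
    finally show ?thesis .
  qed
  have "(\<Sum>i\<in>K \<union> S. c i *\<^sub>R gr i ys) \<bullet> (yb - ys) = (\<Sum>i\<in>K \<union> S. c i * (gr i ys \<bullet> (yb - ys)))"
    by (simp add: inner_sum_left)
  also have "\<dots> \<le> (\<Sum>i\<in>K \<union> S. \<bar>c i\<bar> * (2 * ?F yb))" by (intro sum_mono bound)
  also have "\<dots> = 2 * ?F yb * (\<Sum>i\<in>K \<union> S. \<bar>c i\<bar>)" by (simp add: sum_distrib_right mult.commute)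
  finally show ?thesis .
qed

lemma reduced_kkt_representation:
  fixes f :: "nat \<Rightarrow> 'b::euclidean_space \<Rightarrow> real" and gr :: "nat \<Rightarrow> 'b \<Rightarrow> 'b"
  assumes lp: "l \<le> p" and kkt: "merit_ball_kkt l p f gr yb ys"
    and S: "S \<subseteq> {l+1..p}" and S_indep: "\<not> fam_lin_dep (\<lambda>i. gr i ys) S"
    and S_span: "span ((\<lambda>i. gr i ys) ` {l+1..p}) = span ((\<lambda>i. gr i ys) ` S)"
  shows "\<exists>K c \<tau>. 0 < \<tau> \<and> K \<subseteq> {1..l} \<and> (\<forall>i\<in>K. 0 \<le> c i \<and> f i ys = merit l p f ys) \<and>
    \<not> fam_lin_dep (\<lambda>i. gr i ys) (K \<union> S) \<and> (\<Sum>i\<in>K \<union> S. c i *\<^sub>R gr i ys) = - (\<tau> *\<^sub>R (ys - yb))"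
proof -
  let ?g = "\<lambda>i. gr i ys"
  obtain \<mu> \<tau> where \<tau>: "0 < \<tau>" and \<mu>: "\<forall>c\<in>{1..l}. 0 \<le> \<mu> c \<and> (\<mu> c \<noteq> 0 \<longrightarrow> f c ys = merit l p f ys)"
    and eq: "(\<Sum>c\<in>{1..p}. \<mu> c *\<^sub>R ?g c) = - (\<tau> *\<^sub>R (ys - yb))"
    using kkt unfolding merit_ball_kkt_def by blast
  define P where "P = {i\<in>{1..l}. \<mu> i \<noteq> 0}"
  define z where "z = (\<Sum>j\<in>{l+1..p}. \<mu> j *\<^sub>R ?g j)"
  have "(\<Sum>c\<in>{1..p}. \<mu> c *\<^sub>R ?g c) = (\<Sum>c\<in>{1..l}. \<mu> c *\<^sub>R ?g c) + z"
    unfolding z_def using lp by (subst sum.union_disjoint[symmetric]) (auto intro: sum.cong)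
  also have "(\<Sum>c\<in>{1..l}. \<mu> c *\<^sub>R ?g c) = (\<Sum>i\<in>P. \<mu> i *\<^sub>R ?g i)"
    by (rule sum.mono_neutral_right) (auto simp: P_def)
  finally have split: "(\<Sum>i\<in>P. \<mu> i *\<^sub>R ?g i) + z = - (\<tau> *\<^sub>R (ys - yb))" using eq by simp
  have z_span: "z \<in> span (?g ` S)"
    unfolding z_def S_span[symmetric] by (intro span_sum span_scale span_base) auto
  have P_fin: "finite P" and S_fin: "finite S" and disj: "P \<inter> S = {}"
    using S by (auto simp: P_def finite_subset)
  have \<mu>_pos: "\<forall>i\<in>P. \<mu> i \<ge> 0" using \<mu> by (auto simp: P_def)
  from conic_span_combination_reduce[OF P_fin S_fin disj S_indep \<mu>_pos z_span]
  obtain K c where K: "K \<subseteq> P" "\<forall>i\<in>K. c i \<ge> 0" "\<not> fam_lin_dep ?g (K \<union> S)"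
    and "(\<Sum>i\<in>K \<union> S. c i *\<^sub>R ?g i) = (\<Sum>i\<in>P. \<mu> i *\<^sub>R ?g i) + z"
    by blast
  with split have "(\<Sum>i\<in>K \<union> S. c i *\<^sub>R ?g i) = - (\<tau> *\<^sub>R (ys - yb))" by simp
  moreover have "K \<subseteq> {1..l}" "\<forall>i\<in>K. f i ys = merit l p f ys" using K(1) \<mu> by (auto simp: P_def)
  ultimately show ?thesis using \<tau> K(2,3) by blast
qed

lemma reduced_multipliers:
  fixes f :: "nat \<Rightarrow> 'b::euclidean_space \<Rightarrow> real" and gr :: "nat \<Rightarrow> 'b \<Rightarrow> 'b"
  assumes lp: "l \<le> p" and cc: "convex_constraints l p f"
    and der: "\<forall>c\<in>{1..p}. (f c has_derivative (\<lambda>v. gr c ys \<bullet> v)) (at ys)"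
    and kkt: "merit_ball_kkt l p f gr yb ys"
    and S: "S \<subseteq> {l+1..p}" and S_indep: "\<not> fam_lin_dep (\<lambda>i. gr i ys) S"
    and S_span: "span ((\<lambda>i. gr i ys) ` {l+1..p}) = span ((\<lambda>i. gr i ys) ` S)"
    and ne: "ys \<noteq> yb" and le: "merit l p f ys \<le> merit l p f yb"
  shows "\<exists>K c. K \<subseteq> {1..l} \<and> (\<forall>i\<in>K. 0 \<le> c i \<and> f i ys = merit l p f ys) \<and>
    \<not> fam_lin_dep (\<lambda>i. gr i ys) (K \<union> S) \<and> 0 < (\<Sum>i\<in>K \<union> S. \<bar>c i\<bar>) \<and>
    norm (\<Sum>i\<in>K \<union> S. c i *\<^sub>R gr i ys) / (\<Sum>i\<in>K \<union> S. \<bar>c i\<bar>) \<le> 2 * merit l p f yb / norm (ys - yb)"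
proof -
  let ?g = "\<lambda>i. gr i ys"
  obtain K c \<tau> where \<tau>: "0 < \<tau>" and K: "K \<subseteq> {1..l}" "\<forall>i\<in>K. 0 \<le> c i \<and> f i ys = merit l p f ys"
    "\<not> fam_lin_dep ?g (K \<union> S)" and c_eq: "(\<Sum>i\<in>K \<union> S. c i *\<^sub>R ?g i) = - (\<tau> *\<^sub>R (ys - yb))"
    using reduced_kkt_representation[OF lp kkt S S_indep S_span] by blast
  let ?N = "\<Sum>i\<in>K \<union> S. \<bar>c i\<bar>"
  have "\<tau> * (norm (ys - yb))\<^sup>2 = (\<Sum>i\<in>K \<union> S. c i *\<^sub>R ?g i) \<bullet> (yb - ys)"
    unfolding c_eq by (simp add: power2_norm_eq_inner inner_diff_right inner_diff_left inner_commute algebra_simps)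
  also have "\<dots> \<le> 2 * merit l p f yb * ?N"
    using K le by (intro multiplier_estimate[where gr = gr, OF cc der _ S lp]) auto
  finally have bound: "norm (\<Sum>i\<in>K \<union> S. c i *\<^sub>R ?g i) * norm (ys - yb) \<le> 2 * merit l p f yb * ?N"
    using \<tau> unfolding c_eq by (simp add: power2_eq_square mult.assoc)
  have pos: "0 < norm (\<Sum>i\<in>K \<union> S. c i *\<^sub>R ?g i)" using \<tau> ne unfolding c_eq by simp
  have N: "0 < ?N"
  proof (rule ccontr)
    assume "\<not> ?thesis"
    then have "?N = 0" by (simp add: order.antisym sum_nonneg)
    moreover have "finite (K \<union> S)" using K(1) S by (auto simp: finite_subset)
    ultimately have "\<forall>i\<in>K \<union> S. c i = 0" by (simp add: sum_nonneg_eq_0_iff)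
    then show False using pos by simp
  qed
  then have "norm (\<Sum>i\<in>K \<union> S. c i *\<^sub>R ?g i) / ?N \<le> 2 * merit l p f yb / norm (ys - yb)"
    using bound ne by (simp add: divide_le_eq le_divide_eq mult.commute mult.left_commute)
  then show ?thesis using K N by blast
qed

section \<open>Parametric constraint systems\<close>

lemma convex_on_real_of_ereal:
  fixes g :: "'b::real_vector \<Rightarrow> ereal"
  assumes cvx: "ereal_convex g" and fin: "\<forall>y. \<bar>g y\<bar> \<noteq> \<infinity>"
  shows "convex_on UNIV (\<lambda>y. real_of_ereal (g y))"
proof (rule convex_onI)
  fix t :: real and x y :: 'b assume t: "0 < t" "t < 1"
  have e: "g z = ereal (real_of_ereal (g z))" for z using fin by (simp add: ereal_real')
  have "(x, real_of_ereal (g x)) \<in> {(y, t). g y \<le> ereal t}" "(y, real_of_ereal (g y)) \<in> {(y, t). g y \<le> ereal t}"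
    using e by (auto intro: eq_refl)
  then have "(1 - t) *\<^sub>R (x, real_of_ereal (g x)) + t *\<^sub>R (y, real_of_ereal (g y)) \<in> {(y, t). g y \<le> ereal t}"
    using cvx t unfolding ereal_convex_def by (intro convexD) auto
  then have "g ((1 - t) *\<^sub>R x + t *\<^sub>R y) \<le> ereal ((1 - t) * real_of_ereal (g x) + t * real_of_ereal (g y))"
    by simp
  then show "real_of_ereal (g ((1 - t) *\<^sub>R x + t *\<^sub>R y)) \<le> (1 - t) * real_of_ereal (g x) + t * real_of_ereal (g y)"
    using e[of "(1 - t) *\<^sub>R x + t *\<^sub>R y"] by (metis ereal_less_eq(3))
qed simp

lemma Gam_iff_merit:
  fixes h :: "nat \<Rightarrow> 'a \<Rightarrow> 'b \<Rightarrow> ereal"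
  assumes lp: "l \<le> p" and fin: "\<forall>c\<in>{1..p}. \<bar>h c x y\<bar> \<noteq> \<infinity>"
  shows "y \<in> Gam h l p x \<longleftrightarrow> merit l p (\<lambda>c y. real_of_ereal (h c x y)) y \<le> 0"
proof -
  have "violation l (\<lambda>c y. real_of_ereal (h c x y)) c y \<le> 0 \<longleftrightarrow>
      (if c \<le> l then h c x y \<le> 0 else h c x y = 0)" if "c \<in> {1..p}" for c
    using fin[rule_format, OF that] by (cases "h c x y") (auto simp: violation_def zero_ereal_def)
  moreover have "y \<in> Gam h l p x \<longleftrightarrow> (\<forall>c\<in>{1..p}. if c \<le> l then h c x y \<le> 0 else h c x y = 0)"
    using lp unfolding Gam_def Icon_def Jcon_def by (auto split: if_splits)
  ultimately show ?thesis by (auto simp: merit_le_iff)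
qed

locale parametric_constraints =
  fixes h :: "nat \<Rightarrow> 'a::metric_space \<Rightarrow> 'b::euclidean_space \<Rightarrow> ereal"
    and l p :: nat and W :: "('a \<times> 'b) set"
  assumes l_le_p: "l \<le> p"
    and open_W: "open W"
    and finite_on_W: "\<And>c x y. c \<in> {1..p} \<Longrightarrow> (x, y) \<in> W \<Longrightarrow> \<bar>h c x y\<bar> \<noteq> \<infinity>"
    and continuous_on_W: "\<And>c. c \<in> {1..p} \<Longrightarrow> continuous_on W (\<lambda>(x, y). real_of_ereal (h c x y))"
    and differentiable_on_W:
      "\<And>c x y. c \<in> {1..p} \<Longrightarrow> (x, y) \<in> W \<Longrightarrow> (\<lambda>z. real_of_ereal (h c x z)) differentiable (at y)"
    and grad_continuous_on_W: "\<And>c. c \<in> {1..p} \<Longrightarrow> continuous_on W (\<lambda>(x, y). grad_y (h c) x y)"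
    and finite_on_dom: "\<And>c x y. c \<in> {1..p} \<Longrightarrow> x \<in> domG (Gam h l p) \<Longrightarrow> \<bar>h c x y\<bar> \<noteq> \<infinity>"
    and convex: "\<And>x i. i \<in> Icon l \<Longrightarrow> ereal_convex (h i x)"
    and affine: "\<And>x i. i \<in> Jcon l p \<Longrightarrow> ereal_affine (h i x)"
begin

definition hr :: "'a \<Rightarrow> nat \<Rightarrow> 'b \<Rightarrow> real" where
  "hr x c y = real_of_ereal (h c x y)"

abbreviation grad :: "'a \<Rightarrow> nat \<Rightarrow> 'b \<Rightarrow> 'b" where
  "grad x c y \<equiv> grad_y (h c) x y"

lemma hr_has_derivative:
  "c \<in> {1..p} \<Longrightarrow> (x, y) \<in> W \<Longrightarrow> (hr x c has_derivative (\<lambda>v. grad x c y \<bullet> v)) (at y)"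
  unfolding hr_def[abs_def] by (rule grad_y_has_derivative[OF differentiable_on_W])

lemma convex_constraints_hr:
  assumes "x \<in> domG (Gam h l p)"
  shows "convex_constraints l p (hr x)"
  unfolding convex_constraints_def
proof (intro conjI ballI)
  fix c assume c: "c \<in> {1..l}"
  then have "\<forall>y. \<bar>h c x y\<bar> \<noteq> \<infinity>" using finite_on_dom assms l_le_p by auto
  then show "convex_on UNIV (hr x c)"
    using convex_on_real_of_ereal[OF convex] c unfolding hr_def[abs_def] by (simp add: Icon_def)
next
  fix c assume "c \<in> {l+1..p}"
  then obtain a b where "\<forall>y. h c x y = ereal (a \<bullet> y + b)"
    using affine[of c x] unfolding ereal_affine_def Jcon_def by blast
  then show "\<exists>a b. \<forall>y. hr x c y = a \<bullet> y + b" by (auto simp: hr_def)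
qed

lemma Gam_iff_merit_hr:
  "(\<forall>c\<in>{1..p}. \<bar>h c x y\<bar> \<noteq> \<infinity>) \<Longrightarrow> y \<in> Gam h l p x \<longleftrightarrow> merit l p (hr x) y \<le> 0"
  using Gam_iff_merit[OF l_le_p] unfolding hr_def[abs_def] by simp

lemma tendsto_hr:
  assumes "c \<in> {1..p}" "(x0, y0) \<in> W" "((\<lambda>k. (X k, Y k)) \<longlongrightarrow> (x0, y0)) F"
  shows "((\<lambda>k. hr (X k) c (Y k)) \<longlongrightarrow> hr x0 c y0) F"
proof -
  have "isCont (\<lambda>(x, y). real_of_ereal (h c x y)) (x0, y0)"
    using continuous_on_W[OF assms(1)] open_W assms(2) by (simp add: continuous_on_eq_continuous_at)
  from isCont_tendsto_compose[OF this assms(3)] show ?thesis by (simp add: hr_def)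
qed

lemma tendsto_grad:
  assumes "c \<in> {1..p}" "(x0, y0) \<in> W" "((\<lambda>k. (X k, Y k)) \<longlongrightarrow> (x0, y0)) F"
  shows "((\<lambda>k. grad (X k) c (Y k)) \<longlongrightarrow> grad x0 c y0) F"
proof -
  have "isCont (\<lambda>(x, y). grad_y (h c) x y) (x0, y0)"
    using grad_continuous_on_W[OF assms(1)] open_W assms(2) by (simp add: continuous_on_eq_continuous_at)
  from isCont_tendsto_compose[OF this assms(3)] show ?thesis by simp
qed

lemma merit_ball_kkt_on_sphere_hr:
  assumes x: "x \<in> domG (Gam h l p)" and r: "0 < r" and W: "\<forall>y\<in>cball yb r. (x, y) \<in> W"
    and disj: "Gam h l p x \<inter> cball yb r = {}"
  shows "\<exists>ys. dist yb ys = r \<and> 0 < merit l p (hr x) ys \<and> merit l p (hr x) ys \<le> merit l p (hr x) yb \<and>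
    merit_ball_kkt l p (hr x) (grad x) yb ys"
proof -
  have fin: "\<forall>c\<in>{1..p}. \<bar>h c x y\<bar> \<noteq> \<infinity>" for y by (intro ballI finite_on_dom[OF _ x])
  obtain w where "w \<in> Gam h l p x" using x by (auto simp: domG_def)
  then have "merit l p (hr x) w \<le> 0" using Gam_iff_merit_hr[OF fin] by blast
  then have feas: "merit l p (hr x) w = 0" using merit_nonneg[of l p "hr x" w] by linarith
  have infeas: "\<forall>y\<in>cball yb r. 0 < merit l p (hr x) y"
    using Gam_iff_merit_hr[OF fin] disj by (auto simp: not_le[symmetric])
  have der: "\<forall>c\<in>{1..p}. \<forall>y\<in>cball yb r. (hr x c has_derivative (\<lambda>v. grad x c y \<bullet> v)) (at y)"
    using W by (auto intro: hr_has_derivative)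
  show ?thesis
    by (rule merit_ball_kkt_on_sphere[where gr = "grad x", OF r convex_constraints_hr[OF x] der feas infeas])
qed

lemma active_at_limit:
  assumes XY: "(\<lambda>k. (X k, Y k)) \<longlonglongrightarrow> (x0, y0)" and W0: "(x0, y0) \<in> W" and i: "i \<in> {1..l}"
    and at_merit: "\<forall>k. hr (X k) i (Y k) = merit l p (hr (X k)) (Y k)"
    and le: "\<forall>k. merit l p (hr (X k)) (Y k) \<le> merit l p (hr (X k)) yb"
    and lim: "(\<lambda>k. merit l p (hr (X k)) yb) \<longlonglongrightarrow> 0"
  shows "i \<in> active_set h l x0 y0"
proof -
  have ip: "i \<in> {1..p}" using i l_le_p by auto
  have "\<forall>k. 0 \<le> hr (X k) i (Y k) \<and> hr (X k) i (Y k) \<le> merit l p (hr (X k)) yb"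
    using at_merit le by (simp add: merit_nonneg)
  then have "(\<lambda>k. hr (X k) i (Y k)) \<longlonglongrightarrow> 0"
    by (intro tendsto_sandwich[OF _ _ tendsto_const lim]) auto
  then have "hr x0 i y0 = 0" using tendsto_hr[OF ip W0 XY] LIMSEQ_unique by blast
  moreover have "\<bar>h i x0 y0\<bar> \<noteq> \<infinity>" using finite_on_W[OF ip W0] .
  ultimately have "h i x0 y0 = 0" by (cases "h i x0 y0") (auto simp: hr_def zero_ereal_def)
  then show ?thesis using i by (simp add: active_set_def Icon_def)
qed

lemma RCPLD_eventually:
  assumes rc: "RCPLD h l p (domG (Gam h l p)) x0 y0" and W0: "(x0, y0) \<in> W"
    and x0: "x0 \<in> domG (Gam h l p)"
    and XY: "(\<lambda>k. (X k, Y k)) \<longlonglongrightarrow> (x0, y0)" and X: "\<forall>k. X k \<in> domG (Gam h l p)"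
  shows "\<exists>U S. S \<subseteq> Jcon l p \<and>
    (\<forall>K\<subseteq>active_set h l x0 y0. pos_lin_dep (\<lambda>i. grad x0 i y0) K (\<lambda>i. grad x0 i y0) S \<longrightarrow>
       (\<forall>(x, y)\<in>U \<inter> (domG (Gam h l p) \<times> UNIV). fam_lin_dep (\<lambda>i. grad x i y) (K \<union> S))) \<and>
    eventually (\<lambda>k. (X k, Y k) \<in> U \<and> \<not> fam_lin_dep (\<lambda>i. grad (X k) i (Y k)) S \<and>
      span ((\<lambda>i. grad (X k) i (Y k)) ` Jcon l p) = span ((\<lambda>i. grad (X k) i (Y k)) ` S)) sequentially"
proof -
  obtain U S where U: "open U" "(x0, y0) \<in> U" and SJ: "S \<subseteq> Jcon l p"
    and S_indep: "\<not> fam_lin_dep (\<lambda>i. grad x0 i y0) S"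
    and S_span: "span ((\<lambda>i. grad x0 i y0) ` S) = span ((\<lambda>i. grad x0 i y0) ` Jcon l p)"
    and rank: "\<forall>q1\<in>U \<inter> (domG (Gam h l p) \<times> UNIV). \<forall>q2\<in>U \<inter> (domG (Gam h l p) \<times> UNIV).
      fam_rank (\<lambda>i. grad (fst q1) i (snd q1)) (Jcon l p) = fam_rank (\<lambda>i. grad (fst q2) i (snd q2)) (Jcon l p)"
    and iii: "\<forall>K\<subseteq>active_set h l x0 y0. pos_lin_dep (\<lambda>i. grad x0 i y0) K (\<lambda>i. grad x0 i y0) S \<longrightarrow>
      (\<forall>(x, y)\<in>U \<inter> (domG (Gam h l p) \<times> UNIV). fam_lin_dep (\<lambda>i. grad x i y) (K \<union> S))"
    using rc unfolding RCPLD_def by blast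
  have J: "finite (Jcon l p)" "Jcon l p \<subseteq> {1..p}" by (auto simp: Jcon_def)
  have S: "finite S" using SJ J finite_subset by blast
  have "eventually (\<lambda>k. (X k, Y k) \<in> U) sequentially" using topological_tendstoD[OF XY U] .
  moreover have "eventually (\<lambda>k. \<not> fam_lin_dep (\<lambda>i. grad (X k) i (Y k)) S) sequentially"
    using SJ J tendsto_grad[OF _ W0 XY] by (intro eventually_not_fam_lin_dep[OF S _ S_indep]) blast
  ultimately have "eventually (\<lambda>k. (X k, Y k) \<in> U \<and> \<not> fam_lin_dep (\<lambda>i. grad (X k) i (Y k)) S \<and>
      span ((\<lambda>i. grad (X k) i (Y k)) ` Jcon l p) = span ((\<lambda>i. grad (X k) i (Y k)) ` S)) sequentially"
  proof eventually_elim
    case (elim k)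
    have "fam_rank (\<lambda>i. grad (X k) i (Y k)) (Jcon l p) = fam_rank (\<lambda>i. grad x0 i y0) (Jcon l p)"
    proof -
      have "(X k, Y k) \<in> U \<inter> (domG (Gam h l p) \<times> UNIV)" "(x0, y0) \<in> U \<inter> (domG (Gam h l p) \<times> UNIV)"
        using elim X x0 U(2) by auto
      from rank[rule_format, OF this] show ?thesis by simp
    qed
    also have "\<dots> = card S" using fam_rank_eq_card[OF S S_indep S_span] .
    finally show ?case using elim span_image_eq_if_fam_rank_eq_card[OF J(1) SJ] by blast
  qed
  then show ?thesis using SJ iii by blast
qed

lemma reduced_multiplier_sequence:
  assumes X: "\<forall>k. X k \<in> domG (Gam h l p)" and XYW: "\<forall>k. (X k, Y k) \<in> W"
    and kkt: "\<forall>k. merit_ball_kkt l p (hr (X k)) (grad (X k)) yb (Y k)"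
    and r: "0 < r" and dist: "\<forall>k. dist yb (Y k) = r"
    and le: "\<forall>k. merit l p (hr (X k)) (Y k) \<le> merit l p (hr (X k)) yb"
    and lim: "(\<lambda>k. merit l p (hr (X k)) yb) \<longlonglongrightarrow> 0"
    and SJ: "S \<subseteq> Jcon l p"
    and S: "\<forall>k. \<not> fam_lin_dep (\<lambda>i. grad (X k) i (Y k)) S \<and>
      span ((\<lambda>i. grad (X k) i (Y k)) ` Jcon l p) = span ((\<lambda>i. grad (X k) i (Y k)) ` S)"
  shows "\<exists>K c. (\<forall>k. K k \<subseteq> {1..l} \<and> (\<forall>i\<in>K k. 0 \<le> c k i \<and> hr (X k) i (Y k) = merit l p (hr (X k)) (Y k)) \<and>
      \<not> fam_lin_dep (\<lambda>i. grad (X k) i (Y k)) (K k \<union> S) \<and> 0 < (\<Sum>i\<in>K k \<union> S. \<bar>c k i\<bar>)) \<and>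
    (\<lambda>k. norm (\<Sum>i\<in>K k \<union> S. c k i *\<^sub>R grad (X k) i (Y k)) / (\<Sum>i\<in>K k \<union> S. \<bar>c k i\<bar>)) \<longlonglongrightarrow> 0"
proof -
  have "\<exists>K c. K \<subseteq> {1..l} \<and> (\<forall>i\<in>K. 0 \<le> c i \<and> hr (X k) i (Y k) = merit l p (hr (X k)) (Y k)) \<and>
      \<not> fam_lin_dep (\<lambda>i. grad (X k) i (Y k)) (K \<union> S) \<and> 0 < (\<Sum>i\<in>K \<union> S. \<bar>c i\<bar>) \<and>
      norm (\<Sum>i\<in>K \<union> S. c i *\<^sub>R grad (X k) i (Y k)) / (\<Sum>i\<in>K \<union> S. \<bar>c i\<bar>) \<le> 2 * merit l p (hr (X k)) yb / r"
    (is "\<exists>K c. ?P k K c") for k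
  proof -
    have "\<forall>c\<in>{1..p}. (hr (X k) c has_derivative (\<lambda>v. grad (X k) c (Y k) \<bullet> v)) (at (Y k))"
      using XYW by (auto intro: hr_has_derivative)
    moreover have "S \<subseteq> {l+1..p}"
      "span ((\<lambda>i. grad (X k) i (Y k)) ` {l+1..p}) = span ((\<lambda>i. grad (X k) i (Y k)) ` S)"
      using SJ S by (simp_all add: Jcon_def)
    moreover have "Y k \<noteq> yb" "norm (Y k - yb) = r"
      using dist r by (auto simp: dist_norm norm_minus_commute)
    ultimately show ?thesis
      using reduced_multipliers[where gr = "grad (X k)", OF l_le_p convex_constraints_hr[OF X[rule_format]]
          _ kkt[rule_format] _ conjunct1[OF S[rule_format]] _ _ le[rule_format]]
      by simp
  qed
  then have "\<forall>k. \<exists>K c. ?P k K c" by blast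
  from choice[OF this] obtain K where "\<forall>k. \<exists>c. ?P k (K k) c" by blast
  from choice[OF this] obtain c where Kc: "\<forall>k. ?P k (K k) (c k)" by blast
  have bound: "(\<lambda>k. 2 * merit l p (hr (X k)) yb / r) \<longlonglongrightarrow> 0"
    using tendsto_divide[OF tendsto_mult[OF tendsto_const lim] tendsto_const, of r] r by simp
  have "(\<lambda>k. norm (\<Sum>i\<in>K k \<union> S. c k i *\<^sub>R grad (X k) i (Y k)) / (\<Sum>i\<in>K k \<union> S. \<bar>c k i\<bar>)) \<longlonglongrightarrow> 0"
  proof (rule tendsto_sandwich[OF _ _ tendsto_const bound])
    show "eventually (\<lambda>k. norm (\<Sum>i\<in>K k \<union> S. c k i *\<^sub>R grad (X k) i (Y k)) / (\<Sum>i\<in>K k \<union> S. \<bar>c k i\<bar>)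
        \<le> 2 * merit l p (hr (X k)) yb / r) sequentially"
      using Kc by (intro always_eventually) blast
  qed (simp add: always_eventually)
  then show ?thesis using Kc by blast
qed

lemma reduced_multipliers_limit:
  assumes W0: "(x0, y0) \<in> W" and XY: "(\<lambda>k. (X k, Y k)) \<longlonglongrightarrow> (x0, y0)"
    and X: "\<forall>k. X k \<in> domG (Gam h l p)" and XYW: "\<forall>k. (X k, Y k) \<in> W"
    and kkt: "\<forall>k. merit_ball_kkt l p (hr (X k)) (grad (X k)) yb (Y k)"
    and r: "0 < r" and dist: "\<forall>k. dist yb (Y k) = r"
    and le: "\<forall>k. merit l p (hr (X k)) (Y k) \<le> merit l p (hr (X k)) yb"
    and lim: "(\<lambda>k. merit l p (hr (X k)) yb) \<longlonglongrightarrow> 0"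
    and SJ: "S \<subseteq> Jcon l p"
    and S: "\<forall>k. \<not> fam_lin_dep (\<lambda>i. grad (X k) i (Y k)) S \<and>
      span ((\<lambda>i. grad (X k) i (Y k)) ` Jcon l p) = span ((\<lambda>i. grad (X k) i (Y k)) ` S)"
  shows "\<exists>K0 k. K0 \<subseteq> active_set h l x0 y0 \<and> pos_lin_dep (\<lambda>i. grad x0 i y0) K0 (\<lambda>i. grad x0 i y0) S \<and>
    \<not> fam_lin_dep (\<lambda>i. grad (X k) i (Y k)) (K0 \<union> S)"
proof -
  obtain K c where K: "\<forall>k. K k \<subseteq> {1..l}"
    and active: "\<forall>k. \<forall>i\<in>K k. 0 \<le> c k i \<and> hr (X k) i (Y k) = merit l p (hr (X k)) (Y k)"
    and indep: "\<forall>k. \<not> fam_lin_dep (\<lambda>i. grad (X k) i (Y k)) (K k \<union> S)"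
    and N: "\<forall>k. 0 < (\<Sum>i\<in>K k \<union> S. \<bar>c k i\<bar>)"
    and small: "(\<lambda>k. norm (\<Sum>i\<in>K k \<union> S. c k i *\<^sub>R grad (X k) i (Y k)) / (\<Sum>i\<in>K k \<union> S. \<bar>c k i\<bar>)) \<longlonglongrightarrow> 0"
    using reduced_multiplier_sequence[OF X XYW kkt r dist le lim SJ S] by blast
  have conv: "\<forall>i\<in>{1..l} \<union> S. (\<lambda>k. grad (X k) i (Y k)) \<longlonglongrightarrow> grad x0 i y0"
  proof
    fix i assume "i \<in> {1..l} \<union> S"
    then have "i \<in> {1..p}" using SJ l_le_p by (auto simp: Jcon_def)
    then show "(\<lambda>k. grad (X k) i (Y k)) \<longlonglongrightarrow> grad x0 i y0" by (rule tendsto_grad[OF _ W0 XY])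
  qed
  have S_fin: "finite S" and disj: "{1..l} \<inter> S = {}" using SJ by (auto simp: Jcon_def finite_subset)
  have pos: "\<forall>k. \<forall>i\<in>K k. c k i \<ge> 0" using active by blast
  from pos_lin_dep_of_vanishing_residuals[OF finite_atLeastAtMost S_fin disj K pos conv N small]
  obtain K0 \<sigma> where \<sigma>: "strict_mono (\<sigma> :: nat \<Rightarrow> nat)" and K\<sigma>: "\<forall>k. K (\<sigma> k) = K0"
    and pld: "pos_lin_dep (\<lambda>i. grad x0 i y0) K0 (\<lambda>i. grad x0 i y0) S"
    by blast
  have "K0 \<subseteq> active_set h l x0 y0"
  proof
    fix i assume i: "i \<in> K0"
    then have il: "i \<in> {1..l}" using K K\<sigma> by blast
    show "i \<in> active_set h l x0 y0"
    proof (rule active_at_limit[OF _ W0 il])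
      show "(\<lambda>k. (X (\<sigma> k), Y (\<sigma> k))) \<longlonglongrightarrow> (x0, y0)"
        using LIMSEQ_subseq_LIMSEQ[OF XY \<sigma>] by (simp add: o_def)
      show "(\<lambda>k. merit l p (hr (X (\<sigma> k))) yb) \<longlonglongrightarrow> 0"
        using LIMSEQ_subseq_LIMSEQ[OF lim \<sigma>] by (simp add: o_def)
      show "\<forall>k. merit l p (hr (X (\<sigma> k))) (Y (\<sigma> k)) \<le> merit l p (hr (X (\<sigma> k))) yb" using le by blast
      show "\<forall>k. hr (X (\<sigma> k)) i (Y (\<sigma> k)) = merit l p (hr (X (\<sigma> k))) (Y (\<sigma> k))"
        using active K\<sigma> i by blast
    qed
  qed
  moreover have "\<not> fam_lin_dep (\<lambda>i. grad (X (\<sigma> 0)) i (Y (\<sigma> 0))) (K0 \<union> S)"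
    using indep[rule_format, of "\<sigma> 0"] K\<sigma> by simp
  ultimately show ?thesis using pld by blast
qed

lemma projections_contradict_RCPLD:
  assumes rc: "RCPLD h l p (domG (Gam h l p)) x0 y0" and W0: "(x0, y0) \<in> W"
    and x0: "x0 \<in> domG (Gam h l p)"
    and XY: "(\<lambda>k. (X k, Y k)) \<longlonglongrightarrow> (x0, y0)"
    and X: "\<forall>k. X k \<in> domG (Gam h l p)" and XYW: "\<forall>k. (X k, Y k) \<in> W"
    and r: "0 < r" and dist: "\<forall>k. dist yb (Y k) = r"
    and kkt: "\<forall>k. merit_ball_kkt l p (hr (X k)) (grad (X k)) yb (Y k)"
    and le: "\<forall>k. merit l p (hr (X k)) (Y k) \<le> merit l p (hr (X k)) yb"
    and lim: "(\<lambda>k. merit l p (hr (X k)) yb) \<longlonglongrightarrow> 0"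
  shows False
proof -
  obtain U S where SJ: "S \<subseteq> Jcon l p"
    and iii: "\<forall>K\<subseteq>active_set h l x0 y0. pos_lin_dep (\<lambda>i. grad x0 i y0) K (\<lambda>i. grad x0 i y0) S \<longrightarrow>
       (\<forall>(x, y)\<in>U \<inter> (domG (Gam h l p) \<times> UNIV). fam_lin_dep (\<lambda>i. grad x i y) (K \<union> S))"
    and ev: "eventually (\<lambda>k. (X k, Y k) \<in> U \<and> \<not> fam_lin_dep (\<lambda>i. grad (X k) i (Y k)) S \<and>
      span ((\<lambda>i. grad (X k) i (Y k)) ` Jcon l p) = span ((\<lambda>i. grad (X k) i (Y k)) ` S)) sequentially"
    using RCPLD_eventually[OF rc W0 x0 XY X] by blast
  from ev obtain k0 where k0: "\<forall>k\<ge>k0. (X k, Y k) \<in> U \<and> \<not> fam_lin_dep (\<lambda>i. grad (X k) i (Y k)) S \<and>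
      span ((\<lambda>i. grad (X k) i (Y k)) ` Jcon l p) = span ((\<lambda>i. grad (X k) i (Y k)) ` S)"
    unfolding eventually_sequentially by blast
  have "\<forall>k. \<not> fam_lin_dep (\<lambda>i. grad (X (k + k0)) i (Y (k + k0))) S \<and>
      span ((\<lambda>i. grad (X (k + k0)) i (Y (k + k0))) ` Jcon l p) =
      span ((\<lambda>i. grad (X (k + k0)) i (Y (k + k0))) ` S)"
    using k0 by simp
  from reduced_multipliers_limit[where X = "\<lambda>k. X (k + k0)" and Y = "\<lambda>k. Y (k + k0)",
      OF W0 LIMSEQ_ignore_initial_segment[OF XY] _ _ _ r _ _ LIMSEQ_ignore_initial_segment[OF lim] SJ this]
  obtain K0 k where "K0 \<subseteq> active_set h l x0 y0" "pos_lin_dep (\<lambda>i. grad x0 i y0) K0 (\<lambda>i. grad x0 i y0) S"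
    and indep: "\<not> fam_lin_dep (\<lambda>i. grad (X (k + k0)) i (Y (k + k0))) (K0 \<union> S)"
    using X XYW dist kkt le by auto
  moreover have "(X (k + k0), Y (k + k0)) \<in> U \<inter> (domG (Gam h l p) \<times> UNIV)" using k0 X by simp
  ultimately show False using iii by blast
qed

lemma tendsto_merit_hr:
  assumes "(\<lambda>k. (X k, Y k)) \<longlonglongrightarrow> (x0, y0)" and "(x0, y0) \<in> W"
  shows "(\<lambda>k. merit l p (hr (X k)) (Y k)) \<longlonglongrightarrow> merit l p (hr x0) y0"
  using assms by (intro tendsto_merit ballI tendsto_hr)

lemma Gam_meets_ball:
  assumes x0: "x0 \<in> domG (Gam h l p)" and yb: "yb \<in> Gam h l p x0"
    and rcpld: "\<forall>y\<in>Gam h l p x0. RCPLD h l p (domG (Gam h l p)) x0 y"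
    and r: "0 < r" and W: "\<forall>x\<in>ball x0 r. \<forall>y\<in>cball yb r. (x, y) \<in> W"
    and xs: "xs \<longlonglongrightarrow> x0" "\<forall>k. xs k \<in> ball x0 r \<inter> domG (Gam h l p)"
  shows "\<exists>k. Gam h l p (xs k) \<inter> cball yb r \<noteq> {}"
proof (rule ccontr)
  assume "\<not> ?thesis"
  then have "\<forall>k. \<exists>ys. dist yb ys = r \<and> merit l p (hr (xs k)) ys \<le> merit l p (hr (xs k)) yb \<and>
      merit_ball_kkt l p (hr (xs k)) (grad (xs k)) yb ys"
    using merit_ball_kkt_on_sphere_hr[OF _ r] xs(2) W by blast
  then obtain ys where ys: "\<forall>k. dist yb (ys k) = r \<and> merit l p (hr (xs k)) (ys k) \<le> merit l p (hr (xs k)) yb \<and>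
      merit_ball_kkt l p (hr (xs k)) (grad (xs k)) yb (ys k)"
    by (rule choice[THEN exE])
  have "\<forall>k. ys k \<in> cball yb r" using ys by simp
  from seq_compactE[OF compact_imp_seq_compact[OF compact_cball] this]
  obtain y0 \<sigma> where y0: "y0 \<in> cball yb r" and \<sigma>: "strict_mono \<sigma>" and ys_lim: "(ys \<circ> \<sigma>) \<longlonglongrightarrow> y0"
    by blast
  have XY: "(\<lambda>k. (xs (\<sigma> k), ys (\<sigma> k))) \<longlonglongrightarrow> (x0, y0)"
    using LIMSEQ_subseq_LIMSEQ[OF xs(1) \<sigma>] ys_lim by (intro tendsto_Pair) (simp_all add: o_def)
  have W0: "(x0, y0) \<in> W" and Wb: "(x0, yb) \<in> W" using W y0 r by auto
  have "merit l p (hr x0) yb = 0"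
    using yb Gam_iff_merit_hr[of x0 yb] finite_on_W[OF _ Wb] merit_nonneg[of l p "hr x0" yb] by auto
  then have lim: "(\<lambda>k. merit l p (hr (xs k)) yb) \<longlonglongrightarrow> 0"
    using tendsto_merit_hr[OF _ Wb, of xs "\<lambda>_. yb"] xs(1) by (simp add: tendsto_Pair)
  have "merit l p (hr x0) y0 \<le> 0"
    using LIMSEQ_le[OF tendsto_merit_hr[OF XY W0] LIMSEQ_subseq_LIMSEQ[OF lim \<sigma>, unfolded o_def]] ys by auto
  moreover have "\<forall>c\<in>{1..p}. \<bar>h c x0 y0\<bar> \<noteq> \<infinity>" by (intro ballI finite_on_W[OF _ W0])
  ultimately have "y0 \<in> Gam h l p x0" using Gam_iff_merit_hr by blast
  then show False
    using projections_contradict_RCPLD[OF _ W0 x0 XY _ _ r, where yb = yb] rcpld xs(2) W ys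
      LIMSEQ_subseq_LIMSEQ[OF lim \<sigma>] by (auto simp: o_def)
qed

lemma eventually_Gam_meets_ball:
  assumes x0: "x0 \<in> domG (Gam h l p)" and yb: "yb \<in> Gam h l p x0"
    and rcpld: "\<forall>y\<in>Gam h l p x0. RCPLD h l p (domG (Gam h l p)) x0 y"
    and r: "0 < r" and W: "\<forall>x\<in>ball x0 r. \<forall>y\<in>cball yb r. (x, y) \<in> W"
  shows "eventually (\<lambda>x. Gam h l p x \<inter> cball yb r \<noteq> {}) (inf (nhds x0) (principal (domG (Gam h l p))))"
proof (rule sequentially_imp_eventually_nhds_within, intro allI impI)
  fix xs assume xs: "(\<forall>n. xs n \<in> domG (Gam h l p)) \<and> xs \<longlonglongrightarrow> x0"
  show "eventually (\<lambda>n. Gam h l p (xs n) \<inter> cball yb r \<noteq> {}) sequentially"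
  proof (rule ccontr)
    assume "\<not> ?thesis"
    then have "frequently (\<lambda>n. Gam h l p (xs n) \<inter> cball yb r = {}) sequentially"
      by (simp add: not_eventually)
    moreover have "eventually (\<lambda>n. xs n \<in> ball x0 r) sequentially"
      using xs r by (intro topological_tendstoD) auto
    ultimately have "frequently (\<lambda>n. xs n \<in> ball x0 r \<and> Gam h l p (xs n) \<inter> cball yb r = {}) sequentially"
      by (rule frequently_eventually_conj)
    from frequently_imp_strict_mono_subseq[OF this] obtain \<sigma> :: "nat \<Rightarrow> nat" where \<sigma>: "strict_mono \<sigma>"
      and bad: "\<forall>k. xs (\<sigma> k) \<in> ball x0 r \<and> Gam h l p (xs (\<sigma> k)) \<inter> cball yb r = {}"
      by blast
    have "(\<lambda>k. xs (\<sigma> k)) \<longlonglongrightarrow> x0" using LIMSEQ_subseq_LIMSEQ[OF conjunct2[OF xs] \<sigma>] by (simp add: o_def)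
    from Gam_meets_ball[OF x0 yb rcpld r W this] show False using bad xs by blast
  qed
qed

theorem lsc_wrt_Gam:
  assumes x0: "x0 \<in> domG (Gam h l p)" and W0: "{x0} \<times> Gam h l p x0 \<subseteq> W"
    and rcpld: "\<forall>y\<in>Gam h l p x0. RCPLD h l p (domG (Gam h l p)) x0 y"
  shows "lsc_wrt (Gam h l p) x0 (domG (Gam h l p))"
  unfolding lsc_wrt_def
proof (intro allI impI)
  fix Ob assume "open Ob \<and> Gam h l p x0 \<inter> Ob \<noteq> {}"
  then obtain yb where Ob: "open Ob" and yb: "yb \<in> Gam h l p x0" "yb \<in> Ob" by blast
  obtain e where e: "0 < e" "ball (x0, yb) e \<subseteq> W" using open_W W0 yb(1) open_contains_ball by blast
  obtain e' where e': "0 < e'" "ball yb e' \<subseteq> Ob" using Ob yb(2) open_contains_ball by blast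
  define r where "r = min (e / 2) (e' / 2)"
  have r: "0 < r" using e e' by (simp add: r_def)
  have "(x, y) \<in> W" if "x \<in> ball x0 r" "y \<in> cball yb r" for x y
  proof -
    have "dist (x0, yb) (x, y) \<le> dist x0 x + dist yb y"
      unfolding dist_Pair_Pair by (rule sqrt_sum_squares_le_sum) auto
    also have "\<dots> < e" using that by (simp add: r_def)
    finally show ?thesis using e(2) by auto
  qed
  then have "eventually (\<lambda>x. Gam h l p x \<inter> cball yb r \<noteq> {}) (inf (nhds x0) (principal (domG (Gam h l p))))"
    by (intro eventually_Gam_meets_ball[OF x0 yb(1) rcpld r]) blast
  then obtain V where V: "open V" "x0 \<in> V" "\<forall>x\<in>V. x \<in> domG (Gam h l p) \<longrightarrow> Gam h l p x \<inter> cball yb r \<noteq> {}"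
    unfolding eventually_inf_principal eventually_nhds by blast
  moreover have "cball yb r \<subseteq> Ob" using e' by (auto simp: r_def intro!: subsetD[OF e'(2)])
  ultimately show "\<exists>V. open V \<and> x0 \<in> V \<and> (\<forall>x\<in>V \<inter> domG (Gam h l p). Gam h l p x \<inter> Ob \<noteq> {})"
    by blast
qed

end

theorem corollary3p4:
  fixes h :: "nat \<Rightarrow> real^'n \<Rightarrow> real^'m \<Rightarrow> ereal"
    and l p :: nat and xbar :: "real^'n"
  assumes lp: "l \<le> p"
    and xbar_dom: "xbar \<in> domG (Gam h l p)"
    and smooth: "\<exists>W. open W \<and> {xbar} \<times> Gam h l p xbar \<subseteq> W \<and>
        (\<forall>i\<in>{1..p}.
           (\<forall>(x, y)\<in>W. \<bar>h i x y\<bar> \<noteq> \<infinity>) \<and>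
           continuous_on W (\<lambda>(x, y). real_of_ereal (h i x y)) \<and>
           (\<forall>(x, y)\<in>W. (\<lambda>z. real_of_ereal (h i x z)) differentiable (at y)) \<and>
           continuous_on W (\<lambda>(x, y). grad_y (h i) x y))"
    and cont_y: "\<forall>x\<in>domG (Gam h l p). \<forall>i\<in>{1..p}.
        (\<forall>y. \<bar>h i x y\<bar> \<noteq> \<infinity>) \<and> continuous_on UNIV (\<lambda>y. real_of_ereal (h i x y))"
    and A1: "\<forall>x. (\<forall>i\<in>Icon l. ereal_convex (h i x)) \<and> (\<forall>i\<in>Jcon l p. ereal_affine (h i x))"
    and A2: "locally_bounded_at (Gam h l p) xbar"
    and rcpld: "\<forall>ybar\<in>Gam h l p xbar. RCPLD h l p (domG (Gam h l p)) xbar ybar"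
  shows "lsc_wrt (Gam h l p) xbar (domG (Gam h l p))"
proof -
  \<comment> \<open>The argument stays in a small ball around a point of \<open>Gam h l p xbar\<close>.\<close>
  obtain W where W: "open W" "{xbar} \<times> Gam h l p xbar \<subseteq> W"
    and props: "\<forall>i\<in>{1..p}. (\<forall>(x, y)\<in>W. \<bar>h i x y\<bar> \<noteq> \<infinity>) \<and>
      continuous_on W (\<lambda>(x, y). real_of_ereal (h i x y)) \<and>
      (\<forall>(x, y)\<in>W. (\<lambda>z. real_of_ereal (h i x z)) differentiable (at y)) \<and>
      continuous_on W (\<lambda>(x, y). grad_y (h i) x y)"
    using smooth by blast
  interpret parametric_constraints h l p W
  proof unfold_locales
    fix c x y assume "c \<in> {1..p}" "(x, y) \<in> W"
    then show "\<bar>h c x y\<bar> \<noteq> \<infinity>" using props by fastforce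
  qed (use lp W(1) props cont_y A1 in auto)
  show ?thesis by (rule lsc_wrt_Gam[OF xbar_dom W(2) rcpld])
qed

end
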